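(* Let $G$ be a finite loopless graph (parallel edges allowed). The restriction maps $\mathrm{Short}(C_1(G;\mathbb{Z}))\to\mathrm{Short}(\mathcal{C}(G))$ and $\mathrm{Short}(C_1(G;\mathbb{Z}))\to\mathrm{Short}(\mathcal{F}(G))$ are surjective, and the inclusion $\mathcal{C}(G)\oplus\mathcal{F}(G)\subset C_1(G;\mathbb{Z})$ induces a natural isomorphism $\varphi:(C(\mathcal{C}(G)),d_{\mathcal{C}})\to(C(\mathcal{F}(G)),-d_{\mathcal{F}})$.
   Context: Fix an orientation of $G=(V,E)$; $C_1(G;\mathbb{Z})$ is the free abelian group on $E$ with $E$ orthonormal, $\partial e=v-w$ for $e$ from $w$ to $v$, $\partial^*$ the adjoint; $\mathcal{C}(G)=\mathrm{im}(\partial^* )\cap C_1(G;\mathbb{Z})$ and $\mathcal{F}(G)=\ker(\partial)\cap C_1(G;\mathbb{Z})$. For an integral positive definite lattice $\Lambda$ of rank $m$: $\Lambda^*=\{x\in\Lambda\otimes\mathbb{Q}:\langle x,y\rangle\in\mathbb{Z}\ \forall y\}$, $\overline{\Lambda}=\Lambda^*/\Lambda$, $\mathrm{Char}(\Lambda)=\{\chi\in\Lambda^*:\langle\chi,y\rangle\equiv\langle y,y\rangle\pmod2\ \forall y\}$, $C(\Lambda)=\mathrm{Char}(\Lambda)/2\Lambda$ (a torsor over $2\Lambda^*/2\Lambda\cong\overline{\Lambda}$), $d([\chi])=\min\{(\langle\chi',\chi'\rangle-m)/4:\chi'\in[\chi]\}$, $\mathrm{Short}(\Lambda)$ the characteristic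 covectors of minimal norm in their class. Restriction maps are restriction of functionals. An isomorphism $(C(\Lambda_1),f_1)\to(C(\Lambda_2),f_2)$ is a bijection $\varphi$ and group isomorphism $\overline{\Lambda}_1\to\overline{\Lambda}_2$ with $f_2\circ\varphi=f_1$ and $\varphi(c)-\varphi(c')=\varphi(c-c')$. *)

theory Defs
  imports Complex_Main "HOL-Algebra.Group"
begin

text \<open>Vectors in the rational vector space with basis E are functions 'e => rat
  vanishing outside E; the standard inner product makes E orthonormal.\<close>

definition ip :: "'e set \<Rightarrow> ('e \<Rightarrow> rat) \<Rightarrow> ('e \<Rightarrow> rat) \<Rightarrow> rat" where
  "ip E x y = (\<Sum>e\<in>E. x e * y e)"

definition zchains :: "'e set \<Rightarrow> ('e \<Rightarrow> rat) set" where
  "zchains E = {x. (\<forall>e\<in>E. x e \<in> \<int>) \<and> (\<forall>e. e \<notin> E \<longrightarrow> x e = 0)}"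

definition bdry :: "'e set \<Rightarrow> ('e \<Rightarrow> 'v) \<Rightarrow> ('e \<Rightarrow> 'v) \<Rightarrow> ('e \<Rightarrow> rat) \<Rightarrow> 'v \<Rightarrow> rat" where
  "bdry E src tgt x v =
     (\<Sum>e\<in>E. (if tgt e = v then x e else 0) - (if src e = v then x e else 0))"

definition cobdry :: "'e set \<Rightarrow> ('e \<Rightarrow> 'v) \<Rightarrow> ('e \<Rightarrow> 'v) \<Rightarrow> ('v \<Rightarrow> rat) \<Rightarrow> 'e \<Rightarrow> rat" where
  "cobdry E src tgt f e = (if e \<in> E then f (tgt e) - f (src e) else 0)"

definition cut_lattice :: "'v set \<Rightarrow> 'e set \<Rightarrow> ('e \<Rightarrow> 'v) \<Rightarrow> ('e \<Rightarrow> 'v) \<Rightarrow> ('e \<Rightarrow> rat) set" where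
  "cut_lattice V E src tgt =
     {x \<in> zchains E. \<exists>f. (\<forall>v. v \<notin> V \<longrightarrow> f v = 0) \<and> x = cobdry E src tgt f}"

definition flow_lattice :: "'v set \<Rightarrow> 'e set \<Rightarrow> ('e \<Rightarrow> 'v) \<Rightarrow> ('e \<Rightarrow> 'v) \<Rightarrow> ('e \<Rightarrow> rat) set" where
  "flow_lattice V E src tgt = {x \<in> zchains E. \<forall>v\<in>V. bdry E src tgt x v = 0}"

definition qspan :: "('e \<Rightarrow> rat) set \<Rightarrow> ('e \<Rightarrow> rat) set" where
  "qspan L = {x. \<exists>S c. finite S \<and> S \<subseteq> L \<and> x = (\<lambda>e. \<Sum>l\<in>S. c l * l e)}"

definition qindep :: "('e \<Rightarrow> rat) set \<Rightarrow> bool" where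
  "qindep S \<longleftrightarrow> (\<forall>c. (\<forall>e. (\<Sum>l\<in>S. c l * l e) = 0) \<longrightarrow> (\<forall>l\<in>S. c l = 0))"

definition lat_rank :: "('e \<Rightarrow> rat) set \<Rightarrow> nat" where
  "lat_rank L = Max {card S | S. finite S \<and> S \<subseteq> L \<and> qindep S}"

definition dual_lat :: "'e set \<Rightarrow> ('e \<Rightarrow> rat) set \<Rightarrow> ('e \<Rightarrow> rat) set" where
  "dual_lat E L = {x \<in> qspan L. \<forall>y\<in>L. ip E x y \<in> \<int>}"

definition char_cov :: "'e set \<Rightarrow> ('e \<Rightarrow> rat) set \<Rightarrow> ('e \<Rightarrow> rat) set" where
  "char_cov E L = {\<chi> \<in> dual_lat E L. \<forall>y\<in>L. \<exists>k::int. ip E \<chi> y - ip E y y = 2 * of_int k}"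

definition char_class :: "('e \<Rightarrow> rat) set \<Rightarrow> ('e \<Rightarrow> rat) \<Rightarrow> ('e \<Rightarrow> rat) set" where
  "char_class L \<chi> = {(\<lambda>e. \<chi> e + 2 * y e) | y. y \<in> L}"

definition char_classes :: "'e set \<Rightarrow> ('e \<Rightarrow> rat) set \<Rightarrow> ('e \<Rightarrow> rat) set set" where
  "char_classes E L = char_class L ` char_cov E L"

text \<open>d([chi]) = min over the class of (norm - rank)/4 (the minimum is attained,
  so it equals the infimum used here).\<close>
definition dinv :: "'e set \<Rightarrow> ('e \<Rightarrow> rat) set \<Rightarrow> ('e \<Rightarrow> rat) set \<Rightarrow> real" where
  "dinv E L c = (Inf {real_of_rat (ip E \<chi> \<chi>) | \<chi>. \<chi> \<in> c} - real (lat_rank L)) / 4"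

definition short_cov :: "'e set \<Rightarrow> ('e \<Rightarrow> rat) set \<Rightarrow> ('e \<Rightarrow> rat) set" where
  "short_cov E L = {\<chi> \<in> char_cov E L. \<forall>\<chi>'\<in>char_class L \<chi>. ip E \<chi> \<chi> \<le> ip E \<chi>' \<chi>'}"

definition dcoset :: "('e \<Rightarrow> rat) set \<Rightarrow> ('e \<Rightarrow> rat) \<Rightarrow> ('e \<Rightarrow> rat) set" where
  "dcoset L x = {(\<lambda>e. x e + y e) | y. y \<in> L}"

definition disc_group :: "'e set \<Rightarrow> ('e \<Rightarrow> rat) set \<Rightarrow> ('e \<Rightarrow> rat) set monoid" where
  "disc_group E L =
    \<lparr>carrier = dcoset L ` dual_lat E L,
     monoid.mult = (\<lambda>A B. {(\<lambda>e. a e + b e) | a b. a \<in> A \<and> b \<in> B}),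
     one = L\<rparr>"

text \<open>Torsor difference c - c' in 2Lambda^*/2Lambda, identified with Lambda^*/Lambda
  via division by 2.\<close>
definition tdiff :: "('e \<Rightarrow> rat) set \<Rightarrow> ('e \<Rightarrow> rat) set \<Rightarrow> ('e \<Rightarrow> rat) set \<Rightarrow> ('e \<Rightarrow> rat) set" where
  "tdiff L c c' = dcoset L (\<lambda>e. ((SOME \<chi>. \<chi> \<in> c) e - (SOME \<chi>. \<chi> \<in> c') e) / 2)"

text \<open>Restriction of the functional ip x to Lambda, as an element of Lambda^* in Lambda tensor Q.\<close>
definition restr :: "'e set \<Rightarrow> ('e \<Rightarrow> rat) set \<Rightarrow> ('e \<Rightarrow> rat) \<Rightarrow> ('e \<Rightarrow> rat)" where
  "restr E L x = (THE r. r \<in> qspan L \<and> (\<forall>y\<in>L. ip E r y = ip E x y))"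

end

theory Submission
  imports Defs "HOL-Library.Function_Algebras" "HOL-Library.Indicator_Function"
begin

text \<open>
  Restricting a sign vector \<open>\<chi> \<in> {\<plusminus>1}\<^sup>E\<close> (an orientation of G) to a sublattice L
  gives a short characteristic covector, because for \<open>y \<in> L\<close> the change of norm
  \<open>4(\<langle>\<chi>,y\<rangle> + \<langle>y,y\<rangle>)\<close> is a sum of terms \<open>y\<^sub>e(y\<^sub>e \<plusminus> 1) \<ge> 0\<close>.
  A characteristic covector \<open>\<xi>\<close> of the cut lattice is determined by its boundary \<open>\<partial>\<xi>\<close>,
  and shortness of \<open>\<xi>\<close> says that \<open>\<Sum>\<^sub>S \<partial>\<xi> + |\<delta>1\<^sub>S|\<^sup>2 \<ge> 0\<close> for every vertex set S;
  Hakimi's argument (reverse a directed path from a vertex of deficit to one of excess, or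
  find a set S violating the inequality) yields an orientation with boundary \<open>\<partial>\<xi>\<close>.

  Every integral chain splits orthogonally as \<open>z = z|\<^sub>C + z|\<^sub>F\<close>, so \<open>z|\<^sub>C\<close> lies in the
  cut lattice iff \<open>z|\<^sub>F\<close> lies in the flow lattice. Hence \<open>[x|\<^sub>C] \<mapsto> [x|\<^sub>F]\<close> for odd chains x
  and \<open>[z|\<^sub>C] \<mapsto> [z|\<^sub>F]\<close> for integral chains z are well defined and injective, and they are
  onto because every dual vector of either lattice lifts to an integral chain. A short
  covector of the flow lattice lifts to an odd chain whose cut part can be made short; the
  norms then add up to \<open>|E|\<close>, forcing the lift to be a sign vector. Finally
  \<open>|\<chi>|\<^sup>2 = |E| = rank C + rank F\<close> splits orthogonally, which gives \<open>d\<^sub>C = -d\<^sub>F\<close>.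
\<close>

section \<open>Rational chains\<close>

definition qscale :: "rat \<Rightarrow> ('e \<Rightarrow> rat) \<Rightarrow> 'e \<Rightarrow> rat" where
  "qscale c f = (\<lambda>e. c * f e)"

lemma qscale_apply [simp]: "qscale c f e = c * f e"
  by (simp add: qscale_def)

interpretation qv: vector_space "qscale :: rat \<Rightarrow> ('e \<Rightarrow> rat) \<Rightarrow> 'e \<Rightarrow> rat"
  by unfold_locales (auto simp: qscale_def fun_eq_iff algebra_simps)

lemma sum_apply: "(\<Sum>a\<in>A. f a) e = (\<Sum>a\<in>A. f a e)"
  by (induction A rule: infinite_finite_induct) auto

lemma qspan_eq_span: "qspan L = qv.span L"
  unfolding qspan_def qv.span_explicit by (auto simp: fun_eq_iff sum_apply)

lemma qindep_iff_independent: "finite S \<Longrightarrow> qindep S \<longleftrightarrow> qv.independent S"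
  unfolding qindep_def using qv.dependent_finite[of S] by (auto simp: fun_eq_iff sum_apply)

definition qchains :: "'e set \<Rightarrow> ('e \<Rightarrow> rat) set" where
  "qchains E = {x. \<forall>e. e \<notin> E \<longrightarrow> x e = 0}"

lemma subspace_qchains: "qv.subspace (qchains E)"
  by (auto simp: qv.subspace_def qchains_def)

lemma span_subset_qchains: "L \<subseteq> qchains E \<Longrightarrow> qv.span L \<subseteq> qchains E"
  using qv.span_minimal[OF _ subspace_qchains] by blast

lemma zchains_subset_qchains: "zchains E \<subseteq> qchains E"
  by (auto simp: zchains_def qchains_def)

lemma zero_in_zchains: "0 \<in> zchains E"
  by (auto simp: zchains_def)

lemma zchains_add: "x \<in> zchains E \<Longrightarrow> y \<in> zchains E \<Longrightarrow> x + y \<in> zchains E"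
  by (auto simp: zchains_def)

lemma zchains_uminus: "x \<in> zchains E \<Longrightarrow> - x \<in> zchains E"
  by (auto simp: zchains_def)

lemma zchains_diff: "x \<in> zchains E \<Longrightarrow> y \<in> zchains E \<Longrightarrow> x - y \<in> zchains E"
  by (auto simp: zchains_def)

lemma ip_add_left: "ip E (x + y) z = ip E x z + ip E y z"
  by (simp add: ip_def sum.distrib algebra_simps)

lemma ip_add_right: "ip E z (x + y) = ip E z x + ip E z y"
  by (simp add: ip_def sum.distrib algebra_simps)

lemma ip_diff_left: "ip E (x - y) z = ip E x z - ip E y z"
  by (simp add: ip_def sum_subtractf algebra_simps)

lemma ip_diff_right: "ip E z (x - y) = ip E z x - ip E z y"
  by (simp add: ip_def sum_subtractf algebra_simps)

lemma ip_scale_left: "ip E (qscale c x) z = c * ip E x z"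
  by (simp add: ip_def sum_distrib_left algebra_simps)

lemma ip_scale_right: "ip E z (qscale c x) = c * ip E z x"
  by (simp add: ip_def sum_distrib_left algebra_simps)

lemma ip_zero_right [simp]: "ip E z 0 = 0"
  by (simp add: ip_def)

lemma ip_zero_left [simp]: "ip E 0 z = 0"
  by (simp add: ip_def)

lemma ip_commute: "ip E x y = ip E y x"
  by (simp add: ip_def mult.commute)

lemma ip_self_nonneg: "ip E x x \<ge> 0"
  by (simp add: ip_def sum_nonneg)

lemma ip_self_eq_0_imp_zero:
  assumes "finite E" "x \<in> qchains E" "ip E x x = 0"
  shows "x = 0"
proof -
  have "\<forall>e\<in>E. x e * x e = 0"
    using assms sum_nonneg_eq_0_iff[of E "\<lambda>e. x e * x e"] by (simp add: ip_def)
  then show ?thesis using assms(2) by (auto simp: qchains_def fun_eq_iff)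
qed

lemma ip_zchains_Ints: "x \<in> zchains E \<Longrightarrow> y \<in> zchains E \<Longrightarrow> ip E x y \<in> \<int>"
  unfolding ip_def zchains_def by (auto intro!: Ints_sum Ints_mult)

lemma ip_eq_0_on_span:
  assumes "\<forall>y\<in>L. ip E x y = 0" "y \<in> qv.span L"
  shows "ip E x y = 0"
  using assms(2)
proof (induction rule: qv.span_induct_alt)
  case (step c a b)
  have "ip E x (qscale c a + b) = c * ip E x a + ip E x b"
    by (simp only: ip_add_right ip_scale_right)
  moreover have "(\<lambda>d. c * a d + b d) = qscale c a + b"
    by (rule ext) simp
  ultimately show ?case using assms(1) step by simp
qed (simp add: ip_def)

definition unit_chain :: "'e \<Rightarrow> 'e \<Rightarrow> rat" where
  "unit_chain e = (\<lambda>e'. if e' = e then 1 else 0)"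

lemma unit_chain_in_zchains: "e \<in> E \<Longrightarrow> unit_chain e \<in> zchains E"
  by (auto simp: unit_chain_def zchains_def)

lemma ip_unit_chain_right: "finite E \<Longrightarrow> e \<in> E \<Longrightarrow> ip E x (unit_chain e) = x e"
  by (simp add: ip_def unit_chain_def if_distrib cong: if_cong)

lemma qchains_subset_span_units:
  assumes "finite E"
  shows "qchains E \<subseteq> qv.span (unit_chain ` E)"
proof
  fix x assume x: "x \<in> qchains E"
  have "x = (\<Sum>e\<in>E. qscale (x e) (unit_chain e))"
    using assms x by (auto simp: fun_eq_iff sum_apply unit_chain_def qchains_def if_distrib
        cong: if_cong)
  also have "\<dots> \<in> qv.span (unit_chain ` E)"
    by (intro qv.span_sum qv.span_scale qv.span_base) auto
  finally show "x \<in> qv.span (unit_chain ` E)" .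
qed

lemma independent_unit_chains: "qv.independent (unit_chain ` E)"
proof
  assume "qv.dependent (unit_chain ` E)"
  then obtain T u v where T: "finite T" "T \<subseteq> unit_chain ` E"
      "(\<Sum>w\<in>T. qscale (u w) w) = 0" "v \<in> T" "u v \<noteq> 0"
    unfolding qv.dependent_explicit by blast
  obtain e where e: "v = unit_chain e" using T by blast
  have "(\<Sum>w\<in>T. qscale (u w) w) e = (\<Sum>w\<in>T. if w = v then u w else 0)"
    unfolding sum_apply
  proof (rule sum.cong)
    fix w assume "w \<in> T"
    then obtain e' where "w = unit_chain e'" using T by blast
    then show "qscale (u w) w e = (if w = v then u w else 0)"
      using e by (auto simp: unit_chain_def fun_eq_iff)
  qed simp
  also have "\<dots> = u v" using T by simp
  finally show False using T by simp
qed

lemma card_unit_chains: "card (unit_chain ` E) = card E"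
  by (rule card_image, rule inj_onI) (auto simp: unit_chain_def fun_eq_iff split: if_splits)

lemma orthogonal_projection_exists:
  assumes "finite E" "finite G"
  shows "\<exists>p\<in>qv.span G. \<forall>g\<in>G. ip E (x - p) g = 0"
  using assms(2)
proof (induction G arbitrary: x rule: finite_induct)
  case empty
  then show ?case using qv.span_zero by blast
next
  case (insert g G)
  obtain p0 where p0: "p0 \<in> qv.span G" "\<forall>h\<in>G. ip E (x - p0) h = 0"
    using insert.IH by blast
  obtain q0 where q0: "q0 \<in> qv.span G" "\<forall>h\<in>G. ip E (g - q0) h = 0"
    using insert.IH by blast
  define g' where "g' = g - q0"
  have span_mono: "qv.span G \<subseteq> qv.span (insert g G)"
    by (rule qv.span_mono) auto
  have g'_span: "g' \<in> qv.span (insert g G)"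
    unfolding g'_def using q0(1) span_mono by (intro qv.span_diff) (auto intro: qv.span_base)
  have g_split: "g = g' + q0"
    unfolding g'_def by simp
  define t where "t = (if ip E g' g' = 0 then 0 else ip E (x - p0) g' / ip E g' g')"
  define p where "p = p0 + qscale t g'"
  have x_p: "x - p = (x - p0) - qscale t g'"
    unfolding p_def by simp
  have orth_G: "\<forall>h\<in>G. ip E (x - p) h = 0"
    using p0(2) q0(2) unfolding x_p g'_def by (simp add: ip_diff_left ip_scale_left)
  have "ip E (x - p) g' = 0"
  proof (cases "ip E g' g' = 0")
    case True
    then have "\<forall>e\<in>E. g' e = 0"
      using assms(1) sum_nonneg_eq_0_iff[of E "\<lambda>e. g' e * g' e"] by (simp add: ip_def)
    then show ?thesis by (simp add: ip_def)
  next
    case False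
    then show ?thesis unfolding x_p by (simp add: t_def ip_diff_left ip_scale_left)
  qed
  moreover have "ip E (x - p) q0 = 0"
    using ip_eq_0_on_span[OF orth_G q0(1)] .
  ultimately have "ip E (x - p) g = 0"
    unfolding g_split by (simp add: ip_add_right)
  moreover have "p \<in> qv.span (insert g G)"
    unfolding p_def using p0(1) span_mono g'_span by (intro qv.span_add qv.span_scale) auto
  ultimately show ?case using orth_G by blast
qed

lemma independent_Un_orthogonal:
  assumes "finite E" "A \<subseteq> qchains E" "B \<subseteq> qchains E" "finite A" "finite B"
    and indep: "qv.independent A" "qv.independent B"
    and orth: "\<And>a b. a \<in> A \<Longrightarrow> b \<in> B \<Longrightarrow> ip E a b = 0"
  shows "qv.independent (A \<union> B)" and "A \<inter> B = {}"
proof -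
  have span_orth: "ip E a b = 0" if a: "a \<in> qv.span A" and b: "b \<in> qv.span B" for a b
  proof -
    have "ip E a' b = 0" if "a' \<in> A" for a'
      using ip_eq_0_on_span[of B E a' b] orth[OF that] b by blast
    then have "\<forall>a'\<in>A. ip E b a' = 0" by (simp add: ip_commute)
    then have "ip E b a = 0" using ip_eq_0_on_span[OF _ a] by blast
    then show ?thesis by (simp add: ip_commute)
  qed
  have zero: "a = 0" if "a \<in> qv.span A" "a \<in> qv.span B" for a
    using span_orth[OF that] ip_self_eq_0_imp_zero[OF assms(1)] span_subset_qchains[OF assms(2)]
      that(1) by blast
  show disj: "A \<inter> B = {}"
    using zero qv.span_base indep(1) qv.dependent_zero by blast
  show "qv.independent (A \<union> B)"
  proof
    assume "qv.dependent (A \<union> B)"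
    then obtain u where u: "\<exists>v\<in>A \<union> B. u v \<noteq> 0" "(\<Sum>v\<in>A \<union> B. qscale (u v) v) = 0"
      using qv.dependent_finite[of "A \<union> B"] assms(4,5) by auto
    define a where "a = (\<Sum>v\<in>A. qscale (u v) v)"
    define b where "b = (\<Sum>v\<in>B. qscale (u v) v)"
    have "a + b = 0"
      using u(2) unfolding a_def b_def by (simp add: sum.union_disjoint assms(4,5) disj)
    moreover have "a \<in> qv.span A" "b \<in> qv.span B"
      unfolding a_def b_def by (intro qv.span_sum qv.span_scale qv.span_base; assumption)+
    ultimately have "a = 0" "b = 0"
      using zero qv.span_neg by (metis add_eq_0_iff2 minus_unique)+
    then have "\<forall>v\<in>A. u v = 0" "\<forall>v\<in>B. u v = 0"
      using indep qv.dependent_finite assms(4,5) unfolding a_def b_def by blast+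
    then show False using u(1) by blast
  qed
qed

lemma card_orthogonal_bases:
  assumes "finite E" "A \<subseteq> qchains E" "B \<subseteq> qchains E" "finite A" "finite B"
    and "qv.independent A" "qv.independent B"
    and "\<And>a b. a \<in> A \<Longrightarrow> b \<in> B \<Longrightarrow> ip E a b = 0"
    and span: "qchains E \<subseteq> qv.span (A \<union> B)"
  shows "card A + card B = card E"
proof -
  have indep: "qv.independent (A \<union> B)" and disj: "A \<inter> B = {}"
    using independent_Un_orthogonal[OF assms(1-8)] by blast+
  have "A \<union> B \<subseteq> qv.span (unit_chain ` E)"
    using assms(2,3) qchains_subset_span_units[OF assms(1)] by blast
  then have "card (A \<union> B) \<le> card (unit_chain ` E)"
    using qv.independent_span_bound[OF finite_imageI[OF assms(1)] indep] by blast
  moreover have "unit_chain ` E \<subseteq> qchains E"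
    by (auto simp: unit_chain_def qchains_def)
  then have "unit_chain ` E \<subseteq> qv.span (A \<union> B)"
    using span by (rule order_trans)
  then have "card (unit_chain ` E) \<le> card (A \<union> B)"
    using qv.independent_span_bound[OF finite_UnI[OF assms(4,5)] independent_unit_chains] by blast
  ultimately show ?thesis
    using card_Un_disjoint[OF assms(4,5) disj] card_unit_chains[of E] by simp
qed

lemma common_denominator:
  fixes x :: "'e \<Rightarrow> rat"
  assumes "finite E"
  shows "\<exists>N::int. N > 0 \<and> (\<forall>e\<in>E. of_int N * x e \<in> \<int>)"
  using assms
proof (induction E rule: finite_induct)
  case empty
  then show ?case by (auto intro: exI[of _ 1])
next
  case (insert e E)
  obtain N where N: "N > 0" "\<forall>e\<in>E. of_int N * x e \<in> \<int>"
    using insert.IH by blast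
  obtain a b where ab: "quotient_of (x e) = (a, b)"
    by (cases "quotient_of (x e)") auto
  have b: "b > 0" and xe: "x e = of_int a / of_int b"
    using quotient_of_denom_pos[OF ab] quotient_of_div[OF ab] by auto
  have "of_int (N * b) * x e = of_int (N * a)"
    using b unfolding xe by simp
  moreover have "of_int (N * b) * x e' = of_int b * (of_int N * x e')" for e'
    by simp
  ultimately have "\<forall>e'\<in>insert e E. of_int (N * b) * x e' \<in> \<int>"
    using N(2) by (metis Ints_mult Ints_of_int insert_iff)
  then show ?case using N(1) b by (intro exI[of _ "N * b"]) simp
qed

section \<open>Parity, odd chains and sign chains\<close>

definition evenq :: "rat \<Rightarrow> bool" where
  "evenq q \<longleftrightarrow> (\<exists>k::int. q = 2 * of_int k)"

lemma evenq_0 [simp]: "evenq 0"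
  unfolding evenq_def by (rule exI[of _ 0]) simp

lemma evenq_add:
  assumes "evenq a" "evenq b"
  shows "evenq (a + b)"
proof -
  obtain k l :: int where "a = 2 * of_int k" "b = 2 * of_int l"
    using assms by (auto simp: evenq_def)
  then have "a + b = 2 * of_int (k + l)" by simp
  then show ?thesis unfolding evenq_def by blast
qed

lemma evenq_diff:
  assumes "evenq a" "evenq b"
  shows "evenq (a - b)"
proof -
  obtain k l :: int where "a = 2 * of_int k" "b = 2 * of_int l"
    using assms by (auto simp: evenq_def)
  then have "a - b = 2 * of_int (k - l)" by simp
  then show ?thesis unfolding evenq_def by blast
qed

lemma evenq_sum: "(\<And>a. a \<in> A \<Longrightarrow> evenq (f a)) \<Longrightarrow> evenq (\<Sum>a\<in>A. f a)"
  by (induction A rule: infinite_finite_induct) (auto intro: evenq_add)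

lemma evenq_double: "a \<in> \<int> \<Longrightarrow> evenq (2 * a)"
  unfolding evenq_def by (auto elim: Ints_cases)

lemma evenq_pos_ge_2: "evenq d \<Longrightarrow> d > 0 \<Longrightarrow> d \<ge> 2"
  unfolding evenq_def by auto

lemma evenq_neg_le_minus_2: "evenq d \<Longrightarrow> d < 0 \<Longrightarrow> d \<le> -2"
  unfolding evenq_def by auto

definition odd_chain :: "'e set \<Rightarrow> ('e \<Rightarrow> rat) \<Rightarrow> bool" where
  "odd_chain E x \<longleftrightarrow> x \<in> qchains E \<and> (\<forall>e\<in>E. \<exists>k::int. x e = 2 * of_int k + 1)"

definition sign_chain :: "'e set \<Rightarrow> ('e \<Rightarrow> rat) \<Rightarrow> bool" where
  "sign_chain E x \<longleftrightarrow> x \<in> qchains E \<and> (\<forall>e\<in>E. x e = 1 \<or> x e = -1)"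

definition all_ones :: "'e set \<Rightarrow> 'e \<Rightarrow> rat" where
  "all_ones E = (\<lambda>e. if e \<in> E then 1 else 0)"

lemma sign_chain_all_ones: "sign_chain E (all_ones E)"
  by (simp add: sign_chain_def all_ones_def qchains_def)

lemma sign_chain_imp_odd_chain:
  assumes "sign_chain E x"
  shows "odd_chain E x"
proof -
  have "\<exists>k::int. x e = 2 * of_int k + 1" if "x e = 1 \<or> x e = -1" for e
  proof -
    have "x e = 2 * of_int (if x e = 1 then 0 else - 1 :: int) + 1"
      using that by auto
    then show ?thesis by blast
  qed
  then show ?thesis using assms unfolding sign_chain_def odd_chain_def by blast
qed

lemma odd_chain_in_zchains: "odd_chain E x \<Longrightarrow> x \<in> zchains E"
  unfolding odd_chain_def zchains_def qchains_def by force

lemma odd_chain_parity: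
  assumes "odd_chain E x" "y \<in> zchains E"
  shows "evenq (ip E x y - ip E y y)"
proof -
  have "evenq (x e * y e - y e * y e)" if e: "e \<in> E" for e
  proof -
    obtain k :: int where k: "x e = 2 * of_int k + 1"
      using assms(1) e by (auto simp: odd_chain_def)
    have "y e \<in> \<int>" using assms(2) e by (simp add: zchains_def)
    then obtain n :: int where n: "y e = of_int n" by (rule Ints_cases)
    have "even (n * n - n)" by simp
    then obtain j where j: "n * n - n = 2 * j" by (rule evenE)
    have "(2 * k + 1) * n - n * n = 2 * (k * n - j)"
      using j by (simp add: algebra_simps)
    moreover have "x e * y e - y e * y e = of_int ((2 * k + 1) * n - n * n)"
      unfolding k n by simp
    ultimately have "x e * y e - y e * y e = 2 * of_int (k * n - j)"
      by simp
    then show ?thesis unfolding evenq_def by blast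
  qed
  then show ?thesis
    by (simp add: ip_def sum_subtractf[symmetric] evenq_sum)
qed

lemma half_diff_odd_chains:
  assumes "odd_chain E x" "odd_chain E x'"
  shows "qscale (1/2) (x - x') \<in> zchains E"
  unfolding zchains_def
proof (intro CollectI conjI allI ballI impI)
  fix e assume e: "e \<in> E"
  obtain k k' :: int where k: "x e = 2 * of_int k + 1" "x' e = 2 * of_int k' + 1"
    using assms e unfolding odd_chain_def by blast
  have "qscale (1/2) (x - x') e = (1/2) * ((2 * of_int k + 1) - (2 * of_int k' + 1))"
    by (simp only: qscale_apply minus_apply k)
  also have "\<dots> = of_int (k - k')" by simp
  finally show "qscale (1/2) (x - x') e \<in> \<int>" by (simp only: Ints_of_int)
next
  fix e assume "e \<notin> E"
  then show "qscale (1/2) (x - x') e = 0" using assms unfolding odd_chain_def qchains_def by simp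
qed

lemma odd_chain_add_double:
  assumes "odd_chain E x" "c \<in> zchains E"
  shows "odd_chain E (x + qscale 2 c)"
  unfolding odd_chain_def
proof (intro conjI ballI)
  show "x + qscale 2 c \<in> qchains E"
    using assms unfolding odd_chain_def zchains_def qchains_def by simp
next
  fix e assume e: "e \<in> E"
  obtain k :: int where k: "x e = 2 * of_int k + 1"
    using assms(1) e unfolding odd_chain_def by blast
  have "c e \<in> \<int>" using assms(2) e by (simp add: zchains_def)
  then obtain m :: int where m: "c e = of_int m" by (rule Ints_cases)
  have "(x + qscale 2 c) e = 2 * of_int (k + m) + 1" using k m by simp
  then show "\<exists>k::int. (x + qscale 2 c) e = 2 * of_int k + 1" by blast
qed

lemma sign_chain_norm:
  assumes "finite E" "sign_chain E x"
  shows "ip E x x = of_nat (card E)"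
proof -
  have "ip E x x = (\<Sum>e\<in>E. 1)"
    unfolding ip_def by (rule sum.cong) (use assms(2) in \<open>auto simp: sign_chain_def\<close>)
  then show ?thesis by simp
qed

lemma odd_square_ge:
  fixes c :: rat
  assumes "c = 2 * of_int k + 1"
  shows "1 \<le> c * c" and "c \<noteq> 1 \<Longrightarrow> c \<noteq> -1 \<Longrightarrow> 9 \<le> c * c"
proof -
  define m where "m = \<bar>2 * k + 1\<bar>"
  have cc: "c * c = of_int (m * m)"
    unfolding assms m_def by (simp add: abs_mult[symmetric])
  have "1 \<le> m" unfolding m_def by presburger
  then have "1 * 1 \<le> m * m" by (intro mult_mono) auto
  then show "1 \<le> c * c" unfolding cc by linarith
  assume "c \<noteq> 1" "c \<noteq> -1"
  then have "k \<noteq> 0" "k \<noteq> -1" unfolding assms by auto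
  then have "3 \<le> m" unfolding m_def by linarith
  then have "3 * 3 \<le> m * m" by (intro mult_mono) auto
  then show "9 \<le> c * c" unfolding cc by linarith
qed

lemma odd_chain_norm_le_card_imp_sign_chain:
  assumes "finite E" "odd_chain E x" "ip E x x \<le> of_nat (card E)"
  shows "sign_chain E x"
proof (rule ccontr)
  assume "\<not> sign_chain E x"
  then obtain e0 where e0: "e0 \<in> E" "x e0 \<noteq> 1" "x e0 \<noteq> -1"
    using assms(2) unfolding sign_chain_def odd_chain_def by blast
  have ge: "1 \<le> x e * x e" if "e \<in> E" for e
    using assms(2) that odd_square_ge(1) unfolding odd_chain_def by blast
  have "1 < x e0 * x e0"
    using assms(2) e0 odd_square_ge(2) unfolding odd_chain_def by fastforce
  then have "(\<Sum>e\<in>E. (1::rat)) < (\<Sum>e\<in>E. x e * x e)"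
    using sum_strict_mono_ex1[OF assms(1), of "\<lambda>e. 1" "\<lambda>e. x e * x e"] ge e0(1) by blast
  then show False using assms(3) unfolding ip_def by simp
qed

lemma sign_chain_shift_nonneg:
  assumes "sign_chain E x" "y \<in> zchains E"
  shows "0 \<le> ip E x y + ip E y y"
proof -
  have "0 \<le> x e * y e + y e * y e" if e: "e \<in> E" for e
  proof -
    have "y e \<in> \<int>" using assms(2) e by (simp add: zchains_def)
    then obtain n :: int where n: "y e = of_int n" by (rule Ints_cases)
    have "0 \<le> n * (n + 1)" by (cases "n \<ge> 0") (auto simp: zero_le_mult_iff)
    moreover have "0 \<le> n * (n - 1)" by (cases "n \<ge> 1") (auto simp: zero_le_mult_iff)
    ultimately have "0 \<le> n * n + n \<and> 0 \<le> n * n - n" by (simp add: algebra_simps)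
    then have "0 \<le> y e * y e + y e \<and> 0 \<le> y e * y e - y e"
      unfolding n by (metis of_int_0_le_iff of_int_add of_int_diff of_int_mult)
    then show ?thesis using assms(1) e by (auto simp: sign_chain_def)
  qed
  then show ?thesis by (simp add: ip_def sum.distrib[symmetric] sum_nonneg)
qed

lemma char_class_norm:
  "ip E (a + qscale 2 y) (a + qscale 2 y) = ip E a a + 4 * (ip E a y + ip E y y)"
  by (simp add: ip_def sum.distrib sum_distrib_left algebra_simps)

lemma ex_min_Ints_diff:
  fixes N :: "'a \<Rightarrow> rat"
  assumes "a \<in> A" "\<And>y. N y \<ge> 0" "\<And>y y'. y \<in> A \<Longrightarrow> y' \<in> A \<Longrightarrow> N y - N y' \<in> \<int>"
  shows "\<exists>y0\<in>A. \<forall>y\<in>A. N y0 \<le> N y"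
proof -
  obtain y0 where y0: "y0 \<in> A" "\<forall>y. y \<in> A \<longrightarrow> nat \<lceil>N y0\<rceil> \<le> nat \<lceil>N y\<rceil>"
    using ex_has_least_nat[of "\<lambda>y. y \<in> A" a "\<lambda>y. nat \<lceil>N y\<rceil>"] assms(1) by blast
  have "N y0 \<le> N y" if y: "y \<in> A" for y
  proof -
    obtain d where d: "N y - N y0 = of_int d"
      using assms(3)[OF y y0(1)] by (rule Ints_cases)
    then have "N y = N y0 + of_int d" by simp
    then have "\<lceil>N y\<rceil> = \<lceil>N y0\<rceil> + d" by simp
    moreover have "nat \<lceil>N y0\<rceil> \<le> nat \<lceil>N y\<rceil>"
      using y0(2) y by blast
    moreover have "0 \<le> \<lceil>N y0\<rceil>" "0 \<le> \<lceil>N y\<rceil>"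
      using assms(2)[of y0] assms(2)[of y] by simp_all
    ultimately have "d \<ge> 0" by linarith
    then show ?thesis using d by linarith
  qed
  then show ?thesis using y0(1) by blast
qed

section \<open>Integral lattices in the edge space\<close>

locale int_lattice =
  fixes E :: "'e set" and L :: "('e \<Rightarrow> rat) set"
  assumes finite_E: "finite E"
    and subset_zchains: "L \<subseteq> zchains E"
    and zero_mem: "0 \<in> L"
    and add_mem: "x \<in> L \<Longrightarrow> y \<in> L \<Longrightarrow> x + y \<in> L"
    and uminus_mem: "x \<in> L \<Longrightarrow> - x \<in> L"
begin

lemma diff_mem: "x \<in> L \<Longrightarrow> y \<in> L \<Longrightarrow> x - y \<in> L"
  using add_mem uminus_mem by (metis diff_conv_add_uminus)

lemma span_subset_qchains: "qv.span L \<subseteq> qchains E"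
  using span_subset_qchains subset_zchains zchains_subset_qchains by blast

lemma finite_basis:
  obtains B where "finite B" "B \<subseteq> L" "qv.independent B" "L \<subseteq> qv.span B"
    "lat_rank L = card B"
proof -
  obtain B where B: "B \<subseteq> L" "qv.independent B" "L \<subseteq> qv.span B"
    using qv.maximal_independent_subset[of L] by blast
  have "B \<subseteq> qv.span (unit_chain ` E)"
    using B(1) subset_zchains zchains_subset_qchains qchains_subset_span_units[OF finite_E]
    by blast
  then have fin: "finite B"
    using qv.independent_span_bound[OF finite_imageI[OF finite_E] B(2)] by blast
  have bound: "card S \<le> card B" if "finite S" "S \<subseteq> L" "qindep S" for S
    using qv.independent_span_bound[OF fin] that B(3) qindep_iff_independent by blast
  have "lat_rank L = card B"
    unfolding lat_rank_def
  proof (rule Max_eqI)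
    show "finite {card S |S. finite S \<and> S \<subseteq> L \<and> qindep S}"
      by (rule finite_subset[of _ "{..card B}"]) (auto dest: bound)
  qed (use bound fin B qindep_iff_independent in blast)+
  with fin B show thesis by (rule that)
qed

lemma restriction_exists: "\<exists>r\<in>qv.span L. \<forall>y\<in>L. ip E r y = ip E x y"
proof -
  obtain B where B: "finite B" "B \<subseteq> L" "L \<subseteq> qv.span B"
    by (rule finite_basis)
  obtain p where p: "p \<in> qv.span B" "\<forall>g\<in>B. ip E (x - p) g = 0"
    using orthogonal_projection_exists[OF finite_E B(1)] by blast
  have "ip E p y = ip E x y" if "y \<in> L" for y
    using ip_eq_0_on_span[OF p(2)] that B(3) by (force simp: ip_diff_left)
  then show ?thesis using p(1) qv.span_mono[OF B(2)] by blast
qed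

lemma restr_unique:
  assumes "r \<in> qv.span L" "\<forall>y\<in>L. ip E r y = ip E x y"
    and "r' \<in> qv.span L" "\<forall>y\<in>L. ip E r' y = ip E x y"
  shows "r = r'"
proof -
  have d: "r - r' \<in> qv.span L" using assms by (simp add: qv.span_diff)
  have "\<forall>y\<in>L. ip E (r - r') y = 0" using assms by (simp add: ip_diff_left)
  from ip_eq_0_on_span[OF this d] show ?thesis
    using ip_self_eq_0_imp_zero[OF finite_E] d span_subset_qchains by fastforce
qed

lemma restr_characterization:
  "restr E L x \<in> qv.span L \<and> (\<forall>y\<in>L. ip E (restr E L x) y = ip E x y)"
proof -
  have "\<exists>!r. r \<in> qspan L \<and> (\<forall>y\<in>L. ip E r y = ip E x y)"
    using restriction_exists restr_unique unfolding qspan_eq_span by blast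
  then show ?thesis unfolding restr_def qspan_eq_span[symmetric] by (rule theI')
qed

lemma restr_in_span: "restr E L x \<in> qv.span L"
  using restr_characterization by blast

lemma restr_ip: "y \<in> L \<Longrightarrow> ip E (restr E L x) y = ip E x y"
  using restr_characterization by blast

lemma restr_in_qchains: "restr E L x \<in> qchains E"
  using restr_in_span span_subset_qchains by blast

lemma restr_eqI: "r \<in> qv.span L \<Longrightarrow> \<forall>y\<in>L. ip E r y = ip E x y \<Longrightarrow> restr E L x = r"
  using restr_unique restr_characterization by blast

lemma restr_id: "x \<in> qv.span L \<Longrightarrow> restr E L x = x"
  by (rule restr_eqI) auto

lemma restr_add: "restr E L (x + y) = restr E L x + restr E L y"
  by (rule restr_eqI) (auto simp: qv.span_add restr_in_span ip_add_left restr_ip)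

lemma restr_diff: "restr E L (x - y) = restr E L x - restr E L y"
  by (rule restr_eqI) (auto simp: qv.span_diff restr_in_span ip_diff_left restr_ip)

lemma restr_scale: "restr E L (qscale c x) = qscale c (restr E L x)"
  by (rule restr_eqI) (auto simp: qv.span_scale restr_in_span ip_scale_left restr_ip)

lemma mem_dual_lat_iff: "x \<in> dual_lat E L \<longleftrightarrow> x \<in> qv.span L \<and> (\<forall>y\<in>L. ip E x y \<in> \<int>)"
  by (simp add: dual_lat_def qspan_eq_span)

lemma mem_char_cov_iff:
  "\<chi> \<in> char_cov E L \<longleftrightarrow> \<chi> \<in> dual_lat E L \<and> (\<forall>y\<in>L. evenq (ip E \<chi> y - ip E y y))"
  by (simp add: char_cov_def evenq_def)

lemma restr_in_dual_lat: "x \<in> zchains E \<Longrightarrow> restr E L x \<in> dual_lat E L"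
  using ip_zchains_Ints subset_zchains by (auto simp: mem_dual_lat_iff restr_in_span restr_ip)

lemma mem_dual_lat: "y \<in> L \<Longrightarrow> y \<in> dual_lat E L"
  using restr_in_dual_lat[of y] restr_id[OF qv.span_base] subset_zchains by auto

lemma restr_odd_chain_char_cov:
  assumes "odd_chain E x"
  shows "restr E L x \<in> char_cov E L"
  using odd_chain_parity[OF assms] subset_zchains restr_in_dual_lat[OF odd_chain_in_zchains[OF assms]]
  by (auto simp: mem_char_cov_iff restr_ip)

lemma char_cov_add_double_dual:
  assumes "\<xi> \<in> char_cov E L" "\<eta> \<in> dual_lat E L"
  shows "\<xi> + qscale 2 \<eta> \<in> char_cov E L"
proof -
  have ip_eq: "ip E (\<xi> + qscale 2 \<eta>) y = ip E \<xi> y + 2 * ip E \<eta> y" for y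
    by (simp only: ip_add_left ip_scale_left)
  have "\<xi> + qscale 2 \<eta> \<in> qv.span L"
    using assms by (simp add: mem_char_cov_iff mem_dual_lat_iff qv.span_add qv.span_scale)
  moreover have "ip E (\<xi> + qscale 2 \<eta>) y \<in> \<int>" if "y \<in> L" for y
    using assms that unfolding ip_eq mem_char_cov_iff mem_dual_lat_iff by auto
  moreover have "evenq (ip E (\<xi> + qscale 2 \<eta>) y - ip E y y)" if "y \<in> L" for y
  proof -
    have "evenq ((ip E \<xi> y - ip E y y) + 2 * ip E \<eta> y)"
      using assms that unfolding mem_char_cov_iff mem_dual_lat_iff
      by (blast intro: evenq_add evenq_double)
    then show ?thesis unfolding ip_eq by (simp add: algebra_simps)
  qed
  ultimately show ?thesis by (simp add: mem_char_cov_iff mem_dual_lat_iff)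
qed

lemma dcoset_eq_image: "dcoset L a = (\<lambda>y. a + y) ` L"
  by (auto simp: dcoset_def plus_fun_def)

lemma char_class_eq_image: "char_class L a = (\<lambda>y. a + qscale 2 y) ` L"
  by (auto simp: char_class_def plus_fun_def qscale_def)

lemma dcoset_eq_iff: "dcoset L a = dcoset L b \<longleftrightarrow> a - b \<in> L"
proof
  assume "dcoset L a = dcoset L b"
  then have "a + 0 \<in> (\<lambda>y. b + y) ` L"
    using zero_mem unfolding dcoset_eq_image by blast
  then show "a - b \<in> L" by (auto simp: algebra_simps)
next
  assume d: "a - b \<in> L"
  have "(\<lambda>y. a + y) ` L = (\<lambda>y. b + y) ` ((\<lambda>y. (a - b) + y) ` L)"
    by (simp add: image_image algebra_simps)
  also have "(\<lambda>y. (a - b) + y) ` L = L"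
  proof
    show "(\<lambda>y. (a - b) + y) ` L \<subseteq> L" using d add_mem by blast
    show "L \<subseteq> (\<lambda>y. (a - b) + y) ` L"
    proof
      fix y assume "y \<in> L"
      then have "y - (a - b) \<in> L" using d diff_mem by blast
      then show "y \<in> (\<lambda>y. (a - b) + y) ` L" by (force simp: image_iff)
    qed
  qed
  finally show "dcoset L a = dcoset L b" unfolding dcoset_eq_image .
qed

lemma int_lattice_double: "int_lattice E (qscale 2 ` L)"
proof
  show "qscale 2 ` L \<subseteq> zchains E"
    using subset_zchains by (auto simp: zchains_def)
  show "0 \<in> qscale 2 ` L"
    using zero_mem by (intro image_eqI[of _ _ 0]) (auto simp: fun_eq_iff)
  show "x + y \<in> qscale 2 ` L" if xy: "x \<in> qscale 2 ` L" "y \<in> qscale 2 ` L" for x y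
  proof -
    obtain a b where "a \<in> L" "b \<in> L" "x = qscale 2 a" "y = qscale 2 b"
      using xy by blast
    then show ?thesis
      by (intro image_eqI[of _ _ "a + b"] add_mem) (auto simp: fun_eq_iff algebra_simps)
  qed
  show "- x \<in> qscale 2 ` L" if x: "x \<in> qscale 2 ` L" for x
  proof -
    obtain a where "a \<in> L" "x = qscale 2 a"
      using x by blast
    then show ?thesis
      by (intro image_eqI[of _ _ "- a"] uminus_mem) (auto simp: fun_eq_iff)
  qed
qed (rule finite_E)

lemma char_class_eq_dcoset_double: "char_class L a = dcoset (qscale 2 ` L) a"
  unfolding char_class_eq_image int_lattice.dcoset_eq_image[OF int_lattice_double]
  by (simp add: image_image)

lemma char_class_eq_iff: "char_class L a = char_class L b \<longleftrightarrow> (\<exists>y\<in>L. a = b + qscale 2 y)"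
  unfolding char_class_eq_dcoset_double int_lattice.dcoset_eq_iff[OF int_lattice_double]
  by (auto simp: algebra_simps)

lemma mem_char_class: "a \<in> char_class L a"
  unfolding char_class_eq_image using zero_mem by (intro image_eqI[of _ _ 0]) auto

lemma char_class_eq_of_mem:
  assumes "s \<in> char_class L a"
  shows "char_class L s = char_class L a"
proof -
  obtain y where "y \<in> L" "s = a + qscale 2 y"
    using assms unfolding char_class_eq_image by blast
  then show ?thesis unfolding char_class_eq_iff by blast
qed

lemma char_class_subset_char_cov: "\<xi> \<in> char_cov E L \<Longrightarrow> char_class L \<xi> \<subseteq> char_cov E L"
  unfolding char_class_eq_image using char_cov_add_double_dual mem_dual_lat by blast

lemma restr_sign_chain_short:
  assumes "sign_chain E x"
  shows "restr E L x \<in> short_cov E L"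
proof -
  let ?r = "restr E L x"
  have "ip E ?r ?r \<le> ip E c c" if c: "c \<in> char_class L ?r" for c
  proof -
    obtain y where y: "y \<in> L" "c = ?r + qscale 2 y"
      using c unfolding char_class_eq_image by blast
    have "0 \<le> ip E x y + ip E y y"
      using sign_chain_shift_nonneg[OF assms] y(1) subset_zchains by blast
    then show ?thesis unfolding y(2) char_class_norm restr_ip[OF y(1)] by simp
  qed
  then show ?thesis
    using restr_odd_chain_char_cov[OF sign_chain_imp_odd_chain[OF assms]]
    by (simp add: short_cov_def)
qed

lemma short_cov_norm_eq:
  assumes "s \<in> short_cov E L" "s' \<in> short_cov E L" "char_class L s = char_class L s'"
  shows "ip E s s = ip E s' s'"
proof -
  have "ip E s s \<le> ip E s' s'"
    using assms(1,3) mem_char_class[of s'] by (auto simp: short_cov_def)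
  moreover have "ip E s' s' \<le> ip E s s"
    using assms(2,3) mem_char_class[of s] by (auto simp: short_cov_def)
  ultimately show ?thesis by simp
qed

lemma short_in_char_class:
  assumes \<xi>: "\<xi> \<in> char_cov E L"
  shows "\<exists>s\<in>char_class L \<xi>. s \<in> short_cov E L"
proof -
  define N where "N y = ip E (\<xi> + qscale 2 y) (\<xi> + qscale 2 y)" for y
  have N_eq: "N y = ip E \<xi> \<xi> + 4 * (ip E \<xi> y + ip E y y)" for y
    unfolding N_def by (rule char_class_norm)
  have N_diff_Ints: "N y - N y' \<in> \<int>" if "y \<in> L" "y' \<in> L" for y y'
  proof -
    have "N y - N y' = 4 * ((ip E \<xi> y + ip E y y) - (ip E \<xi> y' + ip E y' y'))"
      unfolding N_eq by (simp add: algebra_simps)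
    moreover have "ip E y y \<in> \<int>" "ip E y' y' \<in> \<int>"
      using ip_zchains_Ints that subset_zchains by blast+
    moreover have "ip E \<xi> y \<in> \<int>" "ip E \<xi> y' \<in> \<int>"
      using \<xi> that by (simp_all add: mem_char_cov_iff mem_dual_lat_iff)
    ultimately show ?thesis by (simp add: Ints_diff Ints_add Ints_mult)
  qed
  have "\<exists>y0\<in>L. \<forall>y\<in>L. N y0 \<le> N y"
    by (rule ex_min_Ints_diff[OF zero_mem _ N_diff_Ints]) (simp add: N_def ip_self_nonneg)
  then obtain y0 where y0: "y0 \<in> L" "\<And>y. y \<in> L \<Longrightarrow> N y0 \<le> N y" by blast
  define s where "s = \<xi> + qscale 2 y0"
  have s_class: "char_class L s = char_class L \<xi>"
    unfolding s_def char_class_eq_iff using y0(1) by blast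
  have "ip E s s \<le> ip E c c" if c: "c \<in> char_class L s" for c
  proof -
    obtain y where y: "y \<in> L" "c = \<xi> + qscale 2 y"
      using c[unfolded s_class] unfolding char_class_eq_image by (rule imageE)
    have "ip E s s = N y0" by (simp only: N_def s_def)
    also have "\<dots> \<le> N y" using y0(2)[OF y(1)] .
    also have "\<dots> = ip E c c" by (simp only: N_def y(2))
    finally show ?thesis .
  qed
  moreover have s_mem: "s \<in> char_class L \<xi>"
    using mem_char_class[of s] s_class by simp
  moreover have "s \<in> char_cov E L"
    using char_class_subset_char_cov[OF \<xi>] s_mem by blast
  ultimately show ?thesis
    unfolding short_cov_def by blast
qed

lemma dinv_short:
  assumes "s \<in> short_cov E L"
  shows "dinv E L (char_class L s) = (real_of_rat (ip E s s) - real (lat_rank L)) / 4"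
proof -
  have "Inf {real_of_rat (ip E \<chi> \<chi>) | \<chi>. \<chi> \<in> char_class L s} = real_of_rat (ip E s s)"
  proof (rule cInf_eq_minimum)
    show "real_of_rat (ip E s s) \<in> {real_of_rat (ip E \<chi> \<chi>) | \<chi>. \<chi> \<in> char_class L s}"
      using mem_char_class[of s] by blast
  qed (use assms in \<open>auto simp: short_cov_def of_rat_less_eq\<close>)
  then show ?thesis unfolding dinv_def by simp
qed

lemma tdiff_char_class:
  "tdiff L (char_class L a) (char_class L b) = dcoset L (qscale (1/2) (a - b))"
proof -
  have "(SOME \<chi>. \<chi> \<in> char_class L c) \<in> char_class L c" for c
    using mem_char_class by (rule someI[of "\<lambda>\<chi>. \<chi> \<in> char_class L c"])
  then obtain y y' where y: "y \<in> L" "(SOME \<chi>. \<chi> \<in> char_class L a) = a + qscale 2 y"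
    and y': "y' \<in> L" "(SOME \<chi>. \<chi> \<in> char_class L b) = b + qscale 2 y'"
    unfolding char_class_eq_image by blast
  have "(\<lambda>e. ((a + qscale 2 y) e - (b + qscale 2 y') e) / 2) - qscale (1/2) (a - b) = y - y'"
    by (simp add: fun_eq_iff field_simps)
  then show ?thesis
    unfolding tdiff_def y(2) y'(2) dcoset_eq_iff using diff_mem[OF y(1) y'(1)] by simp
qed

lemma odd_lift_of_char_cov:
  assumes dual: "restr E L ` zchains E = dual_lat E L"
    and \<xi>: "\<xi> \<in> char_cov E L"
  shows "\<xi> \<in> restr E L ` {x. odd_chain E x}"
proof -
  let ?one = "restr E L (all_ones E)"
  have one: "?one \<in> char_cov E L"
    using restr_odd_chain_char_cov sign_chain_imp_odd_chain sign_chain_all_ones by blast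
  define \<eta> where "\<eta> = qscale (1/2) (\<xi> - ?one)"
  have "\<eta> \<in> dual_lat E L"
    unfolding mem_dual_lat_iff
  proof
    show "\<eta> \<in> qv.span L"
      using \<xi> one unfolding \<eta>_def mem_char_cov_iff mem_dual_lat_iff
      by (intro qv.span_scale qv.span_diff) auto
    show "\<forall>y\<in>L. ip E \<eta> y \<in> \<int>"
    proof
      fix y assume "y \<in> L"
      then have "evenq ((ip E \<xi> y - ip E y y) - (ip E ?one y - ip E y y))"
        using \<xi> one unfolding mem_char_cov_iff by (blast intro: evenq_diff)
      then obtain k :: int where "ip E \<xi> y - ip E ?one y = 2 * of_int k"
        by (auto simp: evenq_def)
      then have "ip E \<eta> y = of_int k"
        unfolding \<eta>_def by (simp add: ip_scale_left ip_diff_left)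
      then show "ip E \<eta> y \<in> \<int>" by simp
    qed
  qed
  then obtain z where z: "z \<in> zchains E" "restr E L z = \<eta>"
    unfolding dual[symmetric] by blast
  have "odd_chain E (all_ones E + qscale 2 z)"
    using odd_chain_add_double sign_chain_imp_odd_chain[OF sign_chain_all_ones] z(1) by blast
  moreover have "\<xi> = restr E L (all_ones E + qscale 2 z)"
    unfolding restr_add restr_scale z(2) \<eta>_def by (simp add: fun_eq_iff)
  ultimately show ?thesis by blast
qed

lemma dcoset_mult:
  "monoid.mult (disc_group E L) (dcoset L a) (dcoset L b) = dcoset L (a + b)"
proof -
  have "{p + q | p q. p \<in> dcoset L a \<and> q \<in> dcoset L b} = dcoset L (a + b)"
  proof (intro equalityI subsetI)
    fix x assume "x \<in> {p + q | p q. p \<in> dcoset L a \<and> q \<in> dcoset L b}"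
    then obtain y y' where "y \<in> L" "y' \<in> L" "x = (a + y) + (b + y')"
      unfolding dcoset_eq_image by blast
    then show "x \<in> dcoset L (a + b)"
      unfolding dcoset_eq_image by (intro image_eqI[of _ _ "y + y'"] add_mem) (auto simp: algebra_simps)
  next
    fix x assume "x \<in> dcoset L (a + b)"
    then obtain y where "y \<in> L" "x = (a + y) + (b + 0)"
      unfolding dcoset_eq_image by (auto simp: algebra_simps)
    then show "x \<in> {p + q | p q. p \<in> dcoset L a \<and> q \<in> dcoset L b}"
      unfolding dcoset_eq_image using zero_mem by blast
  qed
  then show ?thesis by (simp add: disc_group_def plus_fun_def)
qed

lemma dcoset_restr_eq_iff:
  "dcoset L (restr E L x) = dcoset L (restr E L x') \<longleftrightarrow> restr E L (x - x') \<in> L"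
  by (simp add: dcoset_eq_iff restr_diff)

lemma char_class_restr_eq_iff:
  "char_class L (restr E L x) = char_class L (restr E L x')
    \<longleftrightarrow> restr E L (qscale (1/2) (x - x')) \<in> L"
proof -
  have "restr E L x = restr E L x' + qscale 2 y \<longleftrightarrow> restr E L (qscale (1/2) (x - x')) = y" for y
    by (auto simp: restr_scale restr_diff fun_eq_iff field_simps)
  then show ?thesis unfolding char_class_eq_iff by auto
qed

lemma carrier_disc_group:
  assumes "restr E L ` zchains E = dual_lat E L"
  shows "carrier (disc_group E L) = (\<lambda>x. dcoset L (restr E L x)) ` zchains E"
  by (simp add: disc_group_def assms[symmetric] image_image)

lemma restr_odd_chains:
  assumes dual: "restr E L ` zchains E = dual_lat E L"
  shows "restr E L ` {x. odd_chain E x} = char_cov E L"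
proof
  show "restr E L ` {x. odd_chain E x} \<subseteq> char_cov E L"
    using restr_odd_chain_char_cov by blast
  show "char_cov E L \<subseteq> restr E L ` {x. odd_chain E x}"
    using odd_lift_of_char_cov dual by blast
qed

lemma char_classes_eq_image:
  assumes "restr E L ` zchains E = dual_lat E L"
  shows "char_classes E L = (\<lambda>x. char_class L (restr E L x)) ` {x. odd_chain E x}"
  unfolding char_classes_def restr_odd_chains[OF assms, symmetric] by (simp add: image_image)

end

lemma span_Int_zchains:
  assumes "finite E" "qv.subspace S" "S \<subseteq> qchains E"
  shows "qv.span (S \<inter> zchains E) = S"
proof
  show "qv.span (S \<inter> zchains E) \<subseteq> S"
    using qv.span_minimal[OF _ assms(2)] by blast
  show "S \<subseteq> qv.span (S \<inter> zchains E)"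
  proof
    fix x assume x: "x \<in> S"
    obtain N :: int where N: "N > 0" "\<forall>e\<in>E. of_int N * x e \<in> \<int>"
      using common_denominator[OF assms(1)] by blast
    have "qscale (of_int N) x \<in> S \<inter> zchains E"
      using x N assms(2,3) by (auto simp: qv.subspace_scale zchains_def qchains_def)
    then have "qscale (1 / of_int N) (qscale (of_int N) x) \<in> qv.span (S \<inter> zchains E)"
      by (intro qv.span_scale qv.span_base)
    then show "x \<in> qv.span (S \<inter> zchains E)"
      using N(1) by (simp add: qscale_def)
  qed
qed

lemma int_lattice_Int_zchains:
  assumes "finite E" "qv.subspace S"
  shows "int_lattice E (S \<inter> zchains E)"
  using assms by unfold_locales
    (auto simp: qv.subspace_0 qv.subspace_add qv.subspace_neg zero_in_zchains zchains_add
      zchains_uminus)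

section \<open>The lattice of integral chains\<close>

lemma int_lattice_zchains: "finite E \<Longrightarrow> int_lattice E (zchains E)"
  using int_lattice_Int_zchains[OF _ subspace_qchains] zchains_subset_qchains
  by (metis inf.absorb2)

lemma restr_zchains_id:
  assumes "finite E" "x \<in> qchains E"
  shows "restr E (zchains E) x = x"
proof -
  interpret int_lattice E "zchains E" using assms(1) by (rule int_lattice_zchains)
  have "qv.span (zchains E) = qchains E"
    using span_Int_zchains[OF assms(1) subspace_qchains] zchains_subset_qchains
    by (metis inf.absorb2 order_refl)
  then show ?thesis using restr_id assms(2) by blast
qed

lemma char_cov_zchains:
  assumes "finite E"
  shows "char_cov E (zchains E) = {x. odd_chain E x}"
proof (intro equalityI subsetI)
  interpret int_lattice E "zchains E" using assms by (rule int_lattice_zchains)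
  fix x assume x: "x \<in> char_cov E (zchains E)"
  have "\<exists>k::int. x e = 2 * of_int k + 1" if e: "e \<in> E" for e
  proof -
    have "evenq (ip E x (unit_chain e) - ip E (unit_chain e) (unit_chain e))"
      using x unit_chain_in_zchains[OF e] unfolding mem_char_cov_iff by blast
    then obtain k :: int where "x e - 1 = 2 * of_int k"
      using ip_unit_chain_right[OF assms e] by (auto simp: evenq_def unit_chain_def)
    then show ?thesis by (intro exI[of _ k]) simp
  qed
  moreover have "x \<in> qchains E"
    using x span_subset_qchains by (auto simp: mem_char_cov_iff mem_dual_lat_iff)
  ultimately show "x \<in> {x. odd_chain E x}" by (simp add: odd_chain_def)
next
  interpret int_lattice E "zchains E" using assms by (rule int_lattice_zchains)
  fix x assume "x \<in> {x. odd_chain E x}"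
  then show "x \<in> char_cov E (zchains E)"
    using restr_odd_chain_char_cov restr_zchains_id[OF assms] by (metis mem_Collect_eq odd_chain_def)
qed

lemma short_cov_zchains:
  assumes "finite E"
  shows "short_cov E (zchains E) = {x. sign_chain E x}"
proof (intro equalityI subsetI)
  interpret int_lattice E "zchains E" using assms by (rule int_lattice_zchains)
  fix x assume x: "x \<in> short_cov E (zchains E)"
  then have odd: "odd_chain E x"
    using char_cov_zchains[OF assms] by (simp add: short_cov_def)
  show "x \<in> {x. sign_chain E x}"
  proof (rule ccontr)
    assume "x \<notin> {x. sign_chain E x}"
    then obtain e where e: "e \<in> E" "x e \<noteq> 1" "x e \<noteq> -1"
      using odd unfolding sign_chain_def odd_chain_def by blast
    have big: "9 \<le> x e * x e"
      using odd e odd_square_ge(2) unfolding odd_chain_def by blast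
    define s :: rat where "s = (if x e > 0 then -1 else 1)"
    define y where "y = qscale s (unit_chain e)"
    have y: "y \<in> zchains E"
      using unit_chain_in_zchains[OF e(1)] by (auto simp: y_def s_def zchains_def)
    have "x e \<ge> 3 \<or> x e \<le> -3"
    proof (rule ccontr)
      assume "\<not> (x e \<ge> 3 \<or> x e \<le> -3)"
      then have "\<bar>x e\<bar> * \<bar>x e\<bar> < 3 * 3" by (intro mult_strict_mono) auto
      then show False using big by (simp add: abs_mult[symmetric])
    qed
    then have "ip E x y + ip E y y < 0"
      using ip_unit_chain_right[OF assms e(1)]
      by (auto simp: y_def s_def ip_scale_left ip_scale_right unit_chain_def)
    moreover have "ip E x x \<le> ip E (x + qscale 2 y) (x + qscale 2 y)"
      using x y unfolding short_cov_def char_class_eq_image by blast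
    ultimately show False unfolding char_class_norm by simp
  qed
next
  interpret int_lattice E "zchains E" using assms by (rule int_lattice_zchains)
  fix x assume "x \<in> {x. sign_chain E x}"
  then show "x \<in> short_cov E (zchains E)"
    using restr_sign_chain_short restr_zchains_id[OF assms] by (metis mem_Collect_eq sign_chain_def)
qed

section \<open>Maps induced on quotients\<close>

definition induced_map :: "'a set \<Rightarrow> ('a \<Rightarrow> 'b) \<Rightarrow> ('a \<Rightarrow> 'c) \<Rightarrow> 'b \<Rightarrow> 'c" where
  "induced_map X f g y = g (SOME x. x \<in> X \<and> f x = y)"

lemma induced_map_eq:
  assumes "\<And>x x'. x \<in> X \<Longrightarrow> x' \<in> X \<Longrightarrow> f x = f x' \<longleftrightarrow> g x = g x'" "x \<in> X"
  shows "induced_map X f g (f x) = g x"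
proof -
  have "(SOME x'. x' \<in> X \<and> f x' = f x) \<in> X \<and> f (SOME x'. x' \<in> X \<and> f x' = f x) = f x"
    using assms(2) by (rule someI[where P = "\<lambda>x'. x' \<in> X \<and> f x' = f x", OF conjI]) simp
  then show ?thesis unfolding induced_map_def using assms by blast
qed

lemma bij_betw_induced_map:
  assumes resp: "\<And>x x'. x \<in> X \<Longrightarrow> x' \<in> X \<Longrightarrow> f x = f x' \<longleftrightarrow> g x = g x'"
  shows "bij_betw (induced_map X f g) (f ` X) (g ` X)"
proof (rule bij_betw_imageI)
  show "inj_on (induced_map X f g) (f ` X)"
  proof (rule inj_onI)
    fix a b assume "a \<in> f ` X" "b \<in> f ` X" and eq: "induced_map X f g a = induced_map X f g b"
    then obtain x x' where x: "x \<in> X" "x' \<in> X" "a = f x" "b = f x'" by blast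
    then have "g x = g x'"
      using eq induced_map_eq[of X f g, OF resp x(1)] induced_map_eq[of X f g, OF resp x(2)] by simp
    then show "a = b" using resp x by simp
  qed
  show "induced_map X f g ` f ` X = g ` X"
    using induced_map_eq[of X f g, OF resp] by (auto simp: image_image)
qed

section \<open>Cut and flow lattices\<close>

locale finite_graph =
  fixes V :: "'v set" and E :: "'e set" and src tgt :: "'e \<Rightarrow> 'v"
  assumes finite_V: "finite V" and finite_E: "finite E"
    and ends_in_V: "\<forall>e\<in>E. src e \<in> V \<and> tgt e \<in> V"
begin

abbreviation "Cut \<equiv> cut_lattice V E src tgt"
abbreviation "Flow \<equiv> flow_lattice V E src tgt"
abbreviation "cob \<equiv> cobdry E src tgt"
abbreviation "bd \<equiv> bdry E src tgt"
abbreviation "PC \<equiv> restr E Cut"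
abbreviation "PF \<equiv> restr E Flow"

definition cut_space :: "('e \<Rightarrow> rat) set" where
  "cut_space = {cob f | f. \<forall>v. v \<notin> V \<longrightarrow> f v = 0}"

definition flow_space :: "('e \<Rightarrow> rat) set" where
  "flow_space = {x \<in> qchains E. \<forall>v\<in>V. bd x v = 0}"

lemma src_in_V: "e \<in> E \<Longrightarrow> src e \<in> V"
  using ends_in_V by blast

lemma tgt_in_V: "e \<in> E \<Longrightarrow> tgt e \<in> V"
  using ends_in_V by blast

lemma ip_cobdry: "ip E x (cob g) = (\<Sum>v\<in>V. g v * bd x v)"
proof -
  have "(\<Sum>v\<in>V. g v * bd x v) =
      (\<Sum>v\<in>V. \<Sum>e\<in>E. (if tgt e = v then g v * x e else 0) - (if src e = v then g v * x e else 0))"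
    unfolding bdry_def sum_distrib_left by (intro sum.cong refl) (auto simp: right_diff_distrib)
  also have "\<dots> = (\<Sum>e\<in>E. \<Sum>v\<in>V. (if tgt e = v then g v * x e else 0) - (if src e = v then g v * x e else 0))"
    by (rule sum.swap)
  also have "\<dots> = (\<Sum>e\<in>E. g (tgt e) * x e - g (src e) * x e)"
    by (rule sum.cong) (auto simp: sum_subtractf finite_V src_in_V tgt_in_V)
  also have "\<dots> = ip E x (cob g)"
    unfolding ip_def cobdry_def by (rule sum.cong) (auto simp: algebra_simps)
  finally show ?thesis by simp
qed

lemma ip_cobdry_indicator:
  assumes "S \<subseteq> V"
  shows "ip E x (cob (indicator S)) = (\<Sum>v\<in>S. bd x v)"
proof -
  have "(\<Sum>v\<in>V. indicator S v * bd x v) = (\<Sum>v\<in>V. if v \<in> S then bd x v else 0)"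
    by (rule sum.cong) (auto simp: indicator_def)
  also have "\<dots> = (\<Sum>v\<in>V \<inter> S. bd x v)"
    by (rule sum.inter_restrict[OF finite_V, symmetric])
  finally have "(\<Sum>v\<in>V. indicator S v * bd x v) = (\<Sum>v\<in>V \<inter> S. bd x v)" .
  then show ?thesis using assms by (simp add: ip_cobdry Int_absorb1)
qed

lemma bdry_eq_ip: "v \<in> V \<Longrightarrow> bd x v = ip E x (cob (indicator {v}))"
  by (simp add: ip_cobdry_indicator)

lemma sum_bdry_eq_0: "(\<Sum>v\<in>V. bd x v) = 0"
proof -
  have "cob (indicator V) = 0"
    by (auto simp: cobdry_def fun_eq_iff src_in_V tgt_in_V)
  then show ?thesis using ip_cobdry_indicator[of V x] by (simp add: ip_def)
qed

lemma cobdry_indicator_in_Cut: "S \<subseteq> V \<Longrightarrow> cob (indicator S) \<in> Cut"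
  unfolding cut_lattice_def zchains_def
  by (auto simp: cobdry_def split: split_indicator intro!: exI[of _ "indicator S"])

lemma subspace_cut_space: "qv.subspace cut_space"
  unfolding qv.subspace_def cut_space_def
proof (intro conjI ballI allI)
  show "0 \<in> {cob f |f. \<forall>v. v \<notin> V \<longrightarrow> f v = 0}"
    by (intro CollectI exI[of _ "\<lambda>v. 0"]) (simp add: cobdry_def fun_eq_iff)
  show "x + y \<in> {cob f |f. \<forall>v. v \<notin> V \<longrightarrow> f v = 0}"
    if xy: "x \<in> {cob f |f. \<forall>v. v \<notin> V \<longrightarrow> f v = 0}"
      "y \<in> {cob f |f. \<forall>v. v \<notin> V \<longrightarrow> f v = 0}" for x y
  proof -
    obtain f g where "\<forall>v. v \<notin> V \<longrightarrow> f v = 0" "x = cob f" "\<forall>v. v \<notin> V \<longrightarrow> g v = 0" "y = cob g"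
      using xy by blast
    then show ?thesis
      by (intro CollectI exI[of _ "f + g"]) (simp add: cobdry_def fun_eq_iff)
  qed
  show "qscale c x \<in> {cob f |f. \<forall>v. v \<notin> V \<longrightarrow> f v = 0}"
    if x: "x \<in> {cob f |f. \<forall>v. v \<notin> V \<longrightarrow> f v = 0}" for c x
  proof -
    obtain f where "\<forall>v. v \<notin> V \<longrightarrow> f v = 0" "x = cob f"
      using x by blast
    then show ?thesis
      by (intro CollectI exI[of _ "\<lambda>v. c * f v"]) (simp add: cobdry_def fun_eq_iff algebra_simps)
  qed
qed

lemma subspace_flow_space: "qv.subspace flow_space"
  using subspace_qchains[of E]
  by (auto simp: qv.subspace_def flow_space_def bdry_eq_ip ip_add_left ip_scale_left)

lemma cut_space_subset_qchains: "cut_space \<subseteq> qchains E"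
  by (auto simp: cut_space_def cobdry_def qchains_def)

lemma Cut_eq: "Cut = cut_space \<inter> zchains E"
  by (auto simp: cut_lattice_def cut_space_def)

lemma Flow_eq: "Flow = flow_space \<inter> zchains E"
  using zchains_subset_qchains by (auto simp: flow_lattice_def flow_space_def)

sublocale C: int_lattice E Cut
  unfolding Cut_eq using finite_E subspace_cut_space by (rule int_lattice_Int_zchains)

sublocale F: int_lattice E Flow
  unfolding Flow_eq using finite_E subspace_flow_space by (rule int_lattice_Int_zchains)

lemma span_Cut: "qv.span Cut = cut_space"
  unfolding Cut_eq using finite_E subspace_cut_space cut_space_subset_qchains
  by (rule span_Int_zchains)

lemma span_Flow: "qv.span Flow = flow_space"
  unfolding Flow_eq using finite_E subspace_flow_space
  by (rule span_Int_zchains) (auto simp: flow_space_def)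

lemma flow_space_orthogonal_cut_space: "a \<in> cut_space \<Longrightarrow> b \<in> flow_space \<Longrightarrow> ip E b a = 0"
  unfolding cut_space_def flow_space_def by (auto simp: ip_cobdry)

lemma restr_Flow_cut_space:
  assumes "a \<in> cut_space"
  shows "PF a = 0"
proof (rule F.restr_eqI)
  have "ip E y a = 0" if "y \<in> Flow" for y
    using flow_space_orthogonal_cut_space[OF assms] that span_Flow qv.span_base by blast
  then show "\<forall>y\<in>Flow. ip E 0 y = ip E a y" by (simp add: ip_commute)
qed (rule qv.span_zero)

lemma restr_Flow_eq: 
  assumes "x \<in> qchains E"
  shows "PF x = x - PC x"
proof (rule F.restr_eqI)
  have "bd (x - PC x) v = 0" if "v \<in> V" for v
    using C.restr_ip[OF cobdry_indicator_in_Cut, of "{v}"] that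
    by (simp add: bdry_eq_ip ip_diff_left)
  then have "x - PC x \<in> flow_space"
    using assms C.restr_in_qchains[of x] by (auto simp: flow_space_def qchains_def)
  then show "x - PC x \<in> qv.span Flow" by (simp add: span_Flow)
  have "ip E (PC x) y = 0" if "y \<in> Flow" for y
    using flow_space_orthogonal_cut_space[of "PC x" y] C.restr_in_span span_Cut that
      F.subset_zchains span_Flow qv.span_base by (metis ip_commute subsetD)
  then show "\<forall>y\<in>Flow. ip E (x - PC x) y = ip E x y" by (simp add: ip_diff_left)
qed

lemma restr_Cut_add_restr_Flow: "x \<in> qchains E \<Longrightarrow> PC x + PF x = x"
  by (simp add: restr_Flow_eq)

lemma norm_restr_split:
  assumes "x \<in> qchains E"
  shows "ip E x x = ip E (PC x) (PC x) + ip E (PF x) (PF x)"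
proof -
  have "ip E (PF x) (PC x) = 0"
    using flow_space_orthogonal_cut_space C.restr_in_span F.restr_in_span span_Cut span_Flow
    by blast
  moreover have "ip E x x = ip E (PC x + PF x) (PC x + PF x)"
    using restr_Cut_add_restr_Flow[OF assms] by simp
  ultimately show ?thesis by (simp add: ip_add_left ip_add_right ip_commute)
qed

lemma restr_Cut_mem_iff_restr_Flow_mem:
  assumes "z \<in> zchains E"
  shows "PC z \<in> Cut \<longleftrightarrow> PF z \<in> Flow"
proof -
  have z: "z \<in> qchains E" using assms zchains_subset_qchains by blast
  have "PF z \<in> flow_space" "PC z \<in> cut_space"
    using F.restr_in_span C.restr_in_span span_Flow span_Cut by blast+
  moreover have "PF z = z - PC z" "PC z = z - PF z"
    using restr_Flow_eq[OF z] by simp_all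
  ultimately show ?thesis
    using assms zchains_diff C.subset_zchains F.subset_zchains unfolding Cut_eq Flow_eq
    by (metis IntD2 IntI)
qed

lemma dcoset_Cut_eq_iff_Flow:
  assumes "x \<in> zchains E" "x' \<in> zchains E"
  shows "dcoset Cut (PC x) = dcoset Cut (PC x') \<longleftrightarrow> dcoset Flow (PF x) = dcoset Flow (PF x')"
  unfolding C.dcoset_restr_eq_iff F.dcoset_restr_eq_iff
  using restr_Cut_mem_iff_restr_Flow_mem zchains_diff[OF assms] .

lemma char_class_Cut_eq_iff_Flow:
  assumes "odd_chain E x" "odd_chain E x'"
  shows "char_class Cut (PC x) = char_class Cut (PC x')
    \<longleftrightarrow> char_class Flow (PF x) = char_class Flow (PF x')"
  unfolding C.char_class_restr_eq_iff F.char_class_restr_eq_iff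
  using restr_Cut_mem_iff_restr_Flow_mem half_diff_odd_chains[OF assms] .

lemma rank_Cut_add_rank_Flow: "lat_rank Cut + lat_rank Flow = card E"
proof -
  obtain A where A: "finite A" "A \<subseteq> Cut" "qv.independent A" "Cut \<subseteq> qv.span A"
      "lat_rank Cut = card A"
    by (rule C.finite_basis)
  obtain B where B: "finite B" "B \<subseteq> Flow" "qv.independent B" "Flow \<subseteq> qv.span B"
      "lat_rank Flow = card B"
    by (rule F.finite_basis)
  have "A \<subseteq> qchains E" "B \<subseteq> qchains E"
    using A(2) B(2) C.subset_zchains F.subset_zchains zchains_subset_qchains by blast+
  moreover have "ip E a b = 0" if "a \<in> A" "b \<in> B" for a b
    using flow_space_orthogonal_cut_space[of a b] that A(2) B(2) span_Cut span_Flow qv.span_base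
    by (metis ip_commute subsetD)
  moreover have "qchains E \<subseteq> qv.span (A \<union> B)"
  proof
    fix x assume x: "x \<in> qchains E"
    have "qv.span Cut \<subseteq> qv.span A" "qv.span Flow \<subseteq> qv.span B"
      using qv.span_mono[OF A(4)] qv.span_mono[OF B(4)] by (simp_all only: qv.span_span)
    moreover have "qv.span A \<subseteq> qv.span (A \<union> B)" "qv.span B \<subseteq> qv.span (A \<union> B)"
      by (simp_all add: qv.span_mono)
    ultimately have "PC x + PF x \<in> qv.span (A \<union> B)"
      using C.restr_in_span F.restr_in_span by (blast intro: qv.span_add)
    then show "x \<in> qv.span (A \<union> B)" using restr_Cut_add_restr_Flow[OF x] by simp
  qed
  ultimately show ?thesis
    using card_orthogonal_bases[OF finite_E _ _ A(1) B(1) A(3) B(3)] A(5) B(5) by simp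
qed

definition incidence :: "'e \<Rightarrow> 'v \<Rightarrow> rat" where
  "incidence e z = (if tgt e = z then 1 else 0) - (if src e = z then 1 else 0)"

lemma bdry_eq_sum_incidence: "bd x z = (\<Sum>e\<in>E. x e * incidence e z)"
  unfolding bdry_def incidence_def by (rule sum.cong) (auto simp: algebra_simps)

section \<open>Orientations with prescribed boundary\<close>

definition tail :: "('e \<Rightarrow> rat) \<Rightarrow> 'e \<Rightarrow> 'v" where
  "tail \<chi> e = (if \<chi> e = 1 then src e else tgt e)"

definition head :: "('e \<Rightarrow> rat) \<Rightarrow> 'e \<Rightarrow> 'v" where
  "head \<chi> e = (if \<chi> e = 1 then tgt e else src e)"

lemma sign_chain_incidence:
  assumes "sign_chain E \<chi>" "e \<in> E"
  shows "\<chi> e * incidence e z = (if head \<chi> e = z then 1 else 0) - (if tail \<chi> e = z then 1 else 0)"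
  using assms unfolding sign_chain_def incidence_def head_def tail_def by auto

lemma sign_chain_cobdry:
  assumes "sign_chain E \<chi>" "e \<in> E"
  shows "\<chi> e * cob g e = g (head \<chi> e) - g (tail \<chi> e)"
    and "cob g e * cob g e = (g (head \<chi> e) - g (tail \<chi> e)) * (g (head \<chi> e) - g (tail \<chi> e))"
  using assms unfolding sign_chain_def head_def tail_def cobdry_def by (auto simp: algebra_simps)

fun dwalk :: "('e \<Rightarrow> rat) \<Rightarrow> 'v \<Rightarrow> 'e list \<Rightarrow> 'v \<Rightarrow> bool" where
  "dwalk \<chi> u [] v \<longleftrightarrow> u = v"
| "dwalk \<chi> u (e # p) v \<longleftrightarrow> e \<in> E \<and> tail \<chi> e = u \<and> dwalk \<chi> (head \<chi> e) p v"

lemma dwalk_subset_E: "dwalk \<chi> u p v \<Longrightarrow> set p \<subseteq> E"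
  by (induction p arbitrary: u) auto

lemma dwalk_appendD: "dwalk \<chi> u (p @ q) v \<Longrightarrow> \<exists>w. dwalk \<chi> u p w \<and> dwalk \<chi> w q v"
  by (induction p arbitrary: u) auto

lemma dwalk_telescope:
  "dwalk \<chi> u p v \<Longrightarrow>
    (\<Sum>e\<leftarrow>p. (if head \<chi> e = z then 1 else 0) - (if tail \<chi> e = z then 1 else 0))
    = (if v = z then 1 else 0) - (if u = z then (1::rat) else 0)"
  by (induction p arbitrary: u) auto

definition reverse_on :: "'e list \<Rightarrow> ('e \<Rightarrow> rat) \<Rightarrow> 'e \<Rightarrow> rat" where
  "reverse_on p \<chi> = (\<lambda>e. if e \<in> set p then - \<chi> e else \<chi> e)"

lemma sign_chain_reverse_on: "sign_chain E \<chi> \<Longrightarrow> sign_chain E (reverse_on p \<chi>)"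
  unfolding sign_chain_def reverse_on_def qchains_def by auto

lemma bdry_reverse_on:
  assumes \<chi>: "sign_chain E \<chi>" and p: "dwalk \<chi> u p v" "distinct p"
  shows "bd (reverse_on p \<chi>) z = bd \<chi> z + 2 * ((if u = z then 1 else 0) - (if v = z then 1 else 0))"
proof -
  let ?step = "\<lambda>e. (if head \<chi> e = z then 1 else 0) - (if tail \<chi> e = z then (1::rat) else 0)"
  have pE: "set p \<subseteq> E" using dwalk_subset_E[OF p(1)] .
  have "bd (reverse_on p \<chi>) z - bd \<chi> z = (\<Sum>e\<in>E. if e \<in> set p then -2 * (\<chi> e * incidence e z) else 0)"
    unfolding bdry_eq_sum_incidence sum_subtractf[symmetric]
    by (rule sum.cong) (auto simp: reverse_on_def)
  also have "\<dots> = (\<Sum>e\<in>set p. -2 * (\<chi> e * incidence e z))"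
    using pE finite_E by (simp add: sum.If_cases Int_absorb1)
  also have "\<dots> = (\<Sum>e\<in>set p. -2 * ?step e)"
  proof (rule sum.cong)
    fix e assume "e \<in> set p"
    then have "e \<in> E" using pE by blast
    then show "-2 * (\<chi> e * incidence e z) = -2 * ?step e"
      using sign_chain_incidence[OF \<chi>] by presburger
  qed simp
  also have "\<dots> = -2 * (\<Sum>e\<in>set p. ?step e)"
    by (simp add: sum_distrib_left)
  also have "\<dots> = -2 * (\<Sum>e\<leftarrow>p. ?step e)"
    using p(2) by (simp add: sum_list_distinct_conv_sum_set)
  finally show ?thesis
    using dwalk_telescope[OF p(1)] by (simp add: algebra_simps)
qed

definition reach_set :: "('e \<Rightarrow> rat) \<Rightarrow> 'v \<Rightarrow> 'v set" where
  "reach_set \<chi> v = {u. \<exists>p. dwalk \<chi> u p v \<and> distinct p}"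

lemma mem_reach_set_self: "v \<in> reach_set \<chi> v"
  unfolding reach_set_def by (auto intro: exI[of _ "[]"])

lemma reach_set_closed:
  assumes "e \<in> E" "head \<chi> e \<in> reach_set \<chi> v"
  shows "tail \<chi> e \<in> reach_set \<chi> v"
proof -
  obtain p where p: "dwalk \<chi> (head \<chi> e) p v" "distinct p"
    using assms(2) unfolding reach_set_def by blast
  show ?thesis
  proof (cases "e \<in> set p")
    case False
    then have "dwalk \<chi> (tail \<chi> e) (e # p) v" "distinct (e # p)" using p assms(1) by auto
    then show ?thesis unfolding reach_set_def by blast
  next
    case True
    then obtain p1 p2 where p12: "p = p1 @ e # p2" by (meson split_list)
    then obtain w where "dwalk \<chi> w (e # p2) v"
      using dwalk_appendD p(1) by blast
    then have "dwalk \<chi> (tail \<chi> e) (e # p2) v" by simp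
    moreover have "distinct (e # p2)" using p(2) p12 by simp
    ultimately show ?thesis unfolding reach_set_def by blast
  qed
qed

lemma reach_set_subset_V:
  assumes "v \<in> V"
  shows "reach_set \<chi> v \<subseteq> V"
proof
  fix u assume "u \<in> reach_set \<chi> v"
  then obtain p where p: "dwalk \<chi> u p v" unfolding reach_set_def by blast
  then show "u \<in> V"
    using assms by (cases p) (auto simp: tail_def src_in_V tgt_in_V)
qed


lemma sum_bdry_reach_set:
  assumes \<chi>: "sign_chain E \<chi>" and v: "v \<in> V"
  shows "(\<Sum>z\<in>reach_set \<chi> v. bd \<chi> z)
    + ip E (cob (indicator (reach_set \<chi> v))) (cob (indicator (reach_set \<chi> v))) = 0"
proof -
  let ?S = "reach_set \<chi> v"
  let ?g = "indicator ?S :: 'v \<Rightarrow> rat"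
  \<comment> \<open>No edge is directed into S from outside, so every edge leaving S contributes
    \<open>-1\<close> to the boundary sum and \<open>+1\<close> to the norm of the cut.\<close>
  have crossing: "(?g (head \<chi> e) - ?g (tail \<chi> e))
      + (?g (head \<chi> e) - ?g (tail \<chi> e)) * (?g (head \<chi> e) - ?g (tail \<chi> e)) = 0"
    if e: "e \<in> E" for e
  proof (cases "head \<chi> e \<in> ?S")
    case True
    then have "tail \<chi> e \<in> ?S" using reach_set_closed[OF e] by blast
    then show ?thesis using True by simp
  qed (simp split: split_indicator)
  have "(\<Sum>z\<in>?S. bd \<chi> z) + ip E (cob ?g) (cob ?g)
      = (\<Sum>e\<in>E. \<chi> e * cob ?g e + cob ?g e * cob ?g e)"
    unfolding ip_cobdry_indicator[OF reach_set_subset_V[OF v], symmetric]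
    by (simp add: ip_def sum.distrib)
  also have "\<dots> = 0"
    using crossing sign_chain_cobdry[OF \<chi>] by (intro sum.neutral) simp
  finally show ?thesis .
qed

lemma reverse_on_excess:
  fixes b :: "'v \<Rightarrow> rat"
  assumes \<chi>: "sign_chain E \<chi>" and p: "dwalk \<chi> w p v" "distinct p" and "w \<in> V" "v \<in> V"
    and "bd \<chi> w - b w \<le> -2" "bd \<chi> v - b v \<ge> 2"
  shows "(\<Sum>z\<in>V. \<bar>bd (reverse_on p \<chi>) z - b z\<bar>) = (\<Sum>z\<in>V. \<bar>bd \<chi> z - b z\<bar>) - 4"
proof -
  have "bd (reverse_on p \<chi>) z - b z
      = (bd \<chi> z - b z) + 2 * ((if w = z then 1 else 0) - (if v = z then 1 else 0))" for z
    unfolding bdry_reverse_on[OF \<chi> p] by simp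
  then have "\<bar>bd (reverse_on p \<chi>) z - b z\<bar>
      = \<bar>bd \<chi> z - b z\<bar> - (if z = w then 2 else 0) - (if z = v then 2 else 0)" for z
    using assms(6,7) by auto
  then show ?thesis
    using assms(4,5) finite_V by (simp add: sum_subtractf)
qed

lemma orientation_improvement:
  fixes b :: "'v \<Rightarrow> rat"
  assumes parity: "\<And>\<chi> z. sign_chain E \<chi> \<Longrightarrow> z \<in> V \<Longrightarrow> evenq (bd \<chi> z - b z)"
    and sum_b: "(\<Sum>z\<in>V. b z) = 0"
    and cut_bound: "\<And>S. S \<subseteq> V \<Longrightarrow>
      0 \<le> (\<Sum>z\<in>S. b z) + ip E (cob (indicator S)) (cob (indicator S))"
    and \<chi>: "sign_chain E \<chi>" and ne: "\<exists>z\<in>V. bd \<chi> z \<noteq> b z"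
  shows "\<exists>\<chi>'. sign_chain E \<chi>' \<and>
    (\<Sum>z\<in>V. \<bar>bd \<chi>' z - b z\<bar>) = (\<Sum>z\<in>V. \<bar>bd \<chi> z - b z\<bar>) - 4"
proof -
  define D where "D z = bd \<chi> z - b z" for z
  have sum_D: "(\<Sum>z\<in>V. D z) = 0"
    unfolding D_def using sum_bdry_eq_0 sum_b by (simp add: sum_subtractf)
  obtain v where v: "v \<in> V" "D v > 0"
  proof (rule ccontr)
    assume "\<not> thesis"
    then have "\<forall>z\<in>V. - D z \<ge> 0" using that by force
    moreover have "(\<Sum>z\<in>V. - D z) = 0" using sum_D by (simp add: sum_negf)
    ultimately have "\<forall>z\<in>V. - D z = 0"
      using sum_nonneg_eq_0_iff[OF finite_V, of "\<lambda>z. - D z"] by blast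
    then show False using ne unfolding D_def by auto
  qed
  have Dv: "D v \<ge> 2"
    using evenq_pos_ge_2 parity[OF \<chi> v(1)] v(2) unfolding D_def by simp
  define S where "S = reach_set \<chi> v"
  have S: "S \<subseteq> V" "v \<in> S" "finite S"
    unfolding S_def using reach_set_subset_V[OF v(1)] mem_reach_set_self finite_subset finite_V
    by blast+
  show ?thesis
  proof (cases "\<exists>w\<in>S. D w < 0")
    case True
    then obtain w where w: "w \<in> S" "D w < 0" by blast
    have wV: "w \<in> V" using w S by blast
    have "D w \<le> -2"
      using evenq_neg_le_minus_2 parity[OF \<chi> wV] w(2) unfolding D_def by simp
    moreover obtain p where p: "dwalk \<chi> w p v" "distinct p"
      using w(1) unfolding S_def reach_set_def by blast
    ultimately show ?thesis
      using reverse_on_excess[OF \<chi> p wV v(1)] Dv sign_chain_reverse_on[OF \<chi>]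
      unfolding D_def by blast
  next
    case False
    then have le: "\<forall>z\<in>S. b z \<le> bd \<chi> z" unfolding D_def by (auto simp: not_less)
    have "b v < bd \<chi> v" using v(2) unfolding D_def by simp
    then have "(\<Sum>z\<in>S. b z) < (\<Sum>z\<in>S. bd \<chi> z)"
      using sum_strict_mono_ex1[OF S(3) le] S(2) by blast
    then show ?thesis
      using cut_bound[OF S(1)] sum_bdry_reach_set[OF \<chi> v(1)] unfolding S_def by simp
  qed
qed

theorem orientation_with_prescribed_boundary:
  fixes b :: "'v \<Rightarrow> rat"
  assumes parity: "\<And>\<chi> z. sign_chain E \<chi> \<Longrightarrow> z \<in> V \<Longrightarrow> evenq (bd \<chi> z - b z)"
    and sum_b: "(\<Sum>z\<in>V. b z) = 0"
    and cut_bound: "\<And>S. S \<subseteq> V \<Longrightarrow>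
      0 \<le> (\<Sum>z\<in>S. b z) + ip E (cob (indicator S)) (cob (indicator S))"
  shows "\<exists>\<chi>. sign_chain E \<chi> \<and> (\<forall>z\<in>V. bd \<chi> z = b z)"
proof -
  define M where "M \<chi> = (\<Sum>z\<in>V. \<bar>bd \<chi> z - b z\<bar>)" for \<chi>
  have M_nonneg: "M \<chi> \<ge> 0" for \<chi>
    unfolding M_def by (rule sum_nonneg) simp
  have "\<exists>\<chi>'. sign_chain E \<chi>' \<and> (\<forall>z\<in>V. bd \<chi>' z = b z)"
    if "sign_chain E \<chi>" "M \<chi> \<le> 4 * of_nat n" for n \<chi>
    using that
  proof (induction n arbitrary: \<chi>)
    case (0 \<chi>)
    show ?case
    proof (cases "\<forall>z\<in>V. bd \<chi> z = b z")
      case False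
      then obtain \<chi>' where "M \<chi>' = M \<chi> - 4"
        using orientation_improvement[OF parity sum_b cut_bound "0.prems"(1)] unfolding M_def by blast
      then show ?thesis using M_nonneg[of \<chi>'] "0.prems"(2) by simp
    qed (use "0.prems" in blast)
  next
    case (Suc n \<chi>)
    show ?case
    proof (cases "\<forall>z\<in>V. bd \<chi> z = b z")
      case False
      then obtain \<chi>' where "sign_chain E \<chi>'" "M \<chi>' = M \<chi> - 4"
        using orientation_improvement[OF parity sum_b cut_bound Suc.prems(1)] unfolding M_def by blast
      then show ?thesis using Suc.IH Suc.prems(2) by simp
    qed (use Suc.prems in blast)
  qed
  moreover obtain n :: nat where "M (all_ones E) / 4 \<le> of_nat n"
    using real_arch_simple by blast
  then have "M (all_ones E) \<le> 4 * of_nat n" by simp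
  ultimately show ?thesis using sign_chain_all_ones by blast
qed

section \<open>Short characteristic covectors of the cut lattice\<close>

lemma restr_Cut_eq_of_bdry:
  assumes "a \<in> qv.span Cut" "\<forall>z\<in>V. bd x z = bd a z"
  shows "PC x = a"
proof (rule C.restr_eqI[OF assms(1)])
  show "\<forall>y\<in>Cut. ip E a y = ip E x y"
  proof
    fix y assume "y \<in> Cut"
    then obtain f where "y = cob f" unfolding cut_lattice_def by blast
    then show "ip E a y = ip E x y" using assms(2) by (simp add: ip_cobdry)
  qed
qed

lemma short_Cut_lift:
  assumes \<xi>: "\<xi> \<in> short_cov E Cut"
  shows "\<exists>\<chi>. sign_chain E \<chi> \<and> PC \<chi> = \<xi>"
proof -
  have \<xi>_char: "\<xi> \<in> char_cov E Cut" using \<xi> by (simp add: short_cov_def)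
  have parity: "evenq (bd \<chi> z - bd \<xi> z)" if \<chi>: "sign_chain E \<chi>" and z: "z \<in> V" for \<chi> z
  proof -
    define y where "y = cob (indicator {z})"
    have y: "y \<in> Cut" unfolding y_def using z by (simp add: cobdry_indicator_in_Cut)
    have "evenq ((ip E \<chi> y - ip E y y) - (ip E \<xi> y - ip E y y))"
      using odd_chain_parity[OF sign_chain_imp_odd_chain[OF \<chi>]] y C.subset_zchains \<xi>_char
      by (blast intro: evenq_diff dest: C.mem_char_cov_iff[THEN iffD1])
    then show ?thesis unfolding y_def bdry_eq_ip[OF z] by simp
  qed
  have cut_bound: "0 \<le> (\<Sum>z\<in>S. bd \<xi> z) + ip E (cob (indicator S)) (cob (indicator S))"
    if S: "S \<subseteq> V" for S
  proof -
    define y where "y = cob (indicator S)"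
    have "y \<in> Cut" unfolding y_def using S by (rule cobdry_indicator_in_Cut)
    then have "ip E \<xi> \<xi> \<le> ip E (\<xi> + qscale 2 y) (\<xi> + qscale 2 y)"
      using \<xi> unfolding short_cov_def C.char_class_eq_image by blast
    then show ?thesis unfolding char_class_norm y_def ip_cobdry_indicator[OF S] by simp
  qed
  obtain \<chi> where "sign_chain E \<chi>" "\<forall>z\<in>V. bd \<chi> z = bd \<xi> z"
    using orientation_with_prescribed_boundary[OF parity sum_bdry_eq_0 cut_bound] by blast
  moreover have "\<xi> \<in> qv.span Cut"
    using \<xi>_char by (simp add: C.mem_char_cov_iff C.mem_dual_lat_iff)
  ultimately show ?thesis using restr_Cut_eq_of_bdry by blast
qed

lemma restr_Cut_zchains: "PC ` zchains E = dual_lat E Cut"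
proof
  show "PC ` zchains E \<subseteq> dual_lat E Cut"
    using C.restr_in_dual_lat by blast
  show "dual_lat E Cut \<subseteq> PC ` zchains E"
  proof
    fix \<eta> assume \<eta>: "\<eta> \<in> dual_lat E Cut"
    let ?one = "all_ones E"
    \<comment> \<open>\<open>\<eta>\<close> is half the difference of the cut parts of a sign chain and of \<open>?one\<close>, up to
      a cut: take the sign chain lifting a short vector in the class of \<open>PC ?one + 2\<eta>\<close>.\<close>
    have "PC ?one + qscale 2 \<eta> \<in> char_cov E Cut"
      using C.char_cov_add_double_dual[OF C.restr_odd_chain_char_cov \<eta>]
        sign_chain_imp_odd_chain[OF sign_chain_all_ones] by blast
    then obtain s where s: "s \<in> char_class Cut (PC ?one + qscale 2 \<eta>)" "s \<in> short_cov E Cut"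
      using C.short_in_char_class by blast
    obtain y where y: "y \<in> Cut" "s = PC ?one + qscale 2 \<eta> + qscale 2 y"
      using s(1) unfolding C.char_class_eq_image by blast
    obtain \<chi> where \<chi>: "sign_chain E \<chi>" "PC \<chi> = s"
      using short_Cut_lift[OF s(2)] by blast
    define z where "z = qscale (1/2) (\<chi> - ?one) - y"
    have "z \<in> zchains E"
      unfolding z_def using half_diff_odd_chains sign_chain_imp_odd_chain \<chi>(1) sign_chain_all_ones
        y(1) C.subset_zchains zchains_diff by blast
    moreover have "PC z = \<eta>"
      unfolding z_def C.restr_diff C.restr_scale C.restr_id[OF qv.span_base[OF y(1)]] \<chi>(2) y(2)
      by (simp add: fun_eq_iff field_simps)
    ultimately show "\<eta> \<in> PC ` zchains E" by blast
  qed
qed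

section \<open>Lifting dual vectors of the flow lattice\<close>

definition arc :: "'v \<Rightarrow> 'v \<Rightarrow> bool" where
  "arc u v \<longleftrightarrow> (\<exists>e\<in>E. src e = u \<and> tgt e = v)"

abbreviation connected :: "'v \<Rightarrow> 'v \<Rightarrow> bool" where
  "connected \<equiv> (symclp arc)\<^sup>*\<^sup>*"

definition path_chain :: "'v \<Rightarrow> 'v \<Rightarrow> ('e \<Rightarrow> rat) \<Rightarrow> bool" where
  "path_chain u v w \<longleftrightarrow> w \<in> zchains E \<and>
    (\<forall>z\<in>V. bd w z = (if z = v then 1 else 0) - (if z = u then 1 else 0))"

lemma bdry_add: "bd (x + y) z = bd x z + bd y z"
  by (simp add: bdry_eq_sum_incidence sum.distrib algebra_simps)

lemma bdry_diff: "bd (x - y) z = bd x z - bd y z"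
  by (simp add: bdry_eq_sum_incidence sum_subtractf algebra_simps)

lemma bdry_unit_chain:
  assumes "e \<in> E"
  shows "bd (unit_chain e) z = incidence e z"
proof -
  have "bd (unit_chain e) z = (\<Sum>e'\<in>E. if e' = e then incidence e' z else 0)"
    unfolding bdry_eq_sum_incidence by (rule sum.cong) (auto simp: unit_chain_def)
  then show ?thesis using assms finite_E by simp
qed

lemma path_chain_extend:
  assumes "path_chain u a w" "e \<in> E"
  shows "src e = a \<Longrightarrow> path_chain u (tgt e) (w + unit_chain e)"
    and "tgt e = a \<Longrightarrow> path_chain u (src e) (w - unit_chain e)"
  using assms unit_chain_in_zchains[OF assms(2)]
  by (auto simp: path_chain_def zchains_add zchains_diff bdry_add bdry_diff bdry_unit_chain
      incidence_def)

lemma connected_imp_path_chain: "connected u v \<Longrightarrow> \<exists>w. path_chain u v w"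
proof (induction rule: rtranclp_induct)
  case base
  have "path_chain u u 0"
    by (simp add: path_chain_def zero_in_zchains bdry_eq_sum_incidence)
  then show ?case by blast
next
  case (step a b)
  then obtain w where w: "path_chain u a w" by blast
  from step.hyps(2) show ?case
  proof cases
    case base
    then obtain e where "e \<in> E" "src e = a" "tgt e = b" unfolding arc_def by blast
    then show ?thesis using path_chain_extend(1)[OF w] by blast
  next
    case sym
    then obtain e where "e \<in> E" "src e = b" "tgt e = a" unfolding arc_def by blast
    then show ?thesis using path_chain_extend(2)[OF w] by blast
  qed
qed

definition root :: "'v \<Rightarrow> 'v" where
  "root v = (SOME u. connected v u)"

definition root_chain :: "'v \<Rightarrow> 'e \<Rightarrow> rat" where
  "root_chain v = (SOME w. path_chain (root v) v w)"

lemma path_chain_root_chain: "path_chain (root v) v (root_chain v)"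
proof -
  have "connected v (root v)"
    unfolding root_def by (rule someI[of _ v]) simp
  then have "connected (root v) v"
    by (rule rtranclp_symclp_sym)
  then obtain w where "path_chain (root v) v w"
    using connected_imp_path_chain by blast
  then show ?thesis
    unfolding root_chain_def by (rule someI[where P = "path_chain (root v) v"])
qed

lemma root_eq:
  assumes "connected u v"
  shows "root u = root v"
proof -
  have eq: "equivp connected"
    by (rule equivp_rtranclp_symclp)
  have "connected u x \<longleftrightarrow> connected v x" for x
    using equivp_symp[OF eq assms] equivp_transp[OF eq] assms by blast
  then have "connected u = connected v" by blast
  then show ?thesis by (simp add: root_def)
qed

lemma root_chain_cycle_in_Flow:
  assumes e: "e \<in> E"
  shows "root_chain (tgt e) - (root_chain (src e) + unit_chain e) \<in> Flow"
proof -
  have "arc (src e) (tgt e)"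
    using e unfolding arc_def by blast
  then have "connected (src e) (tgt e)"
    by (intro r_into_rtranclp symclpI)
  then have "root (src e) = root (tgt e)" by (rule root_eq)
  then have "path_chain (root (tgt e)) (tgt e) (root_chain (src e) + unit_chain e)"
    using path_chain_extend(1)[OF path_chain_root_chain[of "src e"] e] by simp
  then show ?thesis
    using path_chain_root_chain[of "tgt e"] zchains_diff
    by (auto simp: path_chain_def flow_lattice_def bdry_diff)
qed

lemma restr_Flow_zchains: "PF ` zchains E = dual_lat E Flow"
proof
  show "PF ` zchains E \<subseteq> dual_lat E Flow"
    using F.restr_in_dual_lat by blast
  show "dual_lat E Flow \<subseteq> PF ` zchains E"
  proof
    fix \<eta> assume \<eta>: "\<eta> \<in> dual_lat E Flow"
    have \<eta>_span: "\<eta> \<in> qv.span Flow" and \<eta>_Ints: "\<forall>y\<in>Flow. ip E \<eta> y \<in> \<int>"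
      using \<eta> by (simp_all add: F.mem_dual_lat_iff)
    \<comment> \<open>A potential making \<open>\<eta>\<close> integral: its value at v is minus the pairing of \<open>\<eta>\<close>
      with a path from the root of the component of v.\<close>
    define h where "h v = (if v \<in> V then - ip E \<eta> (root_chain v) else 0)" for v
    define z where "z = \<eta> + cob h"
    have "z e \<in> \<int>" if e: "e \<in> E" for e
    proof -
      have "z e = - ip E \<eta> (root_chain (tgt e) - (root_chain (src e) + unit_chain e))"
        using e src_in_V tgt_in_V ip_unit_chain_right[OF finite_E e]
        by (simp add: z_def h_def cobdry_def ip_diff_right ip_add_right)
      then show ?thesis using \<eta>_Ints root_chain_cycle_in_Flow[OF e] by simp
    qed
    moreover have "z e = 0" if "e \<notin> E" for e
      using that \<eta>_span F.span_subset_qchains by (auto simp: z_def cobdry_def qchains_def)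
    ultimately have "z \<in> zchains E" by (simp add: zchains_def)
    moreover have "cob h \<in> cut_space"
      by (auto simp: cut_space_def h_def)
    then have "PF z = \<eta>"
      unfolding z_def F.restr_add F.restr_id[OF \<eta>_span] by (simp add: restr_Flow_cut_space)
    ultimately show "\<eta> \<in> PF ` zchains E" by blast
  qed
qed

section \<open>The isomorphism of characteristic classes\<close>

lemma short_Flow_lift:
  assumes \<xi>: "\<xi> \<in> short_cov E Flow"
  shows "\<exists>\<chi>. sign_chain E \<chi> \<and> PF \<chi> = \<xi>"
proof -
  obtain x where x: "odd_chain E x" "PF x = \<xi>"
    using F.odd_lift_of_char_cov[OF restr_Flow_zchains] \<xi> by (auto simp: short_cov_def)
  \<comment> \<open>Shift x by an even cut so that its cut part becomes short, hence comes from a sign chain.\<close>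
  obtain s where s: "s \<in> char_class Cut (PC x)" "s \<in> short_cov E Cut"
    using C.short_in_char_class[OF C.restr_odd_chain_char_cov[OF x(1)]] by blast
  obtain c where c: "c \<in> Cut" "s = PC x + qscale 2 c"
    using s(1) unfolding C.char_class_eq_image by blast
  obtain \<chi> where \<chi>: "sign_chain E \<chi>" "PC \<chi> = s"
    using short_Cut_lift[OF s(2)] by blast
  define x' where "x' = x + qscale 2 c"
  have x': "odd_chain E x'"
    unfolding x'_def using odd_chain_add_double[OF x(1)] c(1) C.subset_zchains by blast
  have "c \<in> cut_space" using c(1) unfolding Cut_eq by blast
  then have PC_x': "PC x' = PC \<chi>" and PF_x': "PF x' = \<xi>"
    unfolding x'_def C.restr_add C.restr_scale F.restr_add F.restr_scale
      C.restr_id[OF qv.span_base[OF c(1)]] restr_Flow_cut_space[OF \<open>c \<in> cut_space\<close>]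
      \<chi>(2) c(2) x(2)
    by (simp_all add: fun_eq_iff)
  have "char_class Flow (PF \<chi>) = char_class Flow \<xi>"
    using char_class_Cut_eq_iff_Flow[OF sign_chain_imp_odd_chain[OF \<chi>(1)] x'] PC_x' PF_x' by simp
  then have "ip E (PF \<chi>) (PF \<chi>) = ip E \<xi> \<xi>"
    using F.short_cov_norm_eq[OF F.restr_sign_chain_short[OF \<chi>(1)] \<xi>] by blast
  then have "ip E x' x' = ip E \<chi> \<chi>"
    using norm_restr_split x' \<chi>(1) PC_x' PF_x' by (simp add: odd_chain_def sign_chain_def)
  then have "sign_chain E x'"
    using odd_chain_norm_le_card_imp_sign_chain[OF finite_E x'] sign_chain_norm[OF finite_E \<chi>(1)]
    by simp
  then show ?thesis using PF_x' by blast
qed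

lemma restr_Cut_short_cov: "PC ` short_cov E (zchains E) = short_cov E Cut"
  using C.restr_sign_chain_short short_Cut_lift by (auto simp: short_cov_zchains[OF finite_E])

lemma restr_Flow_short_cov: "PF ` short_cov E (zchains E) = short_cov E Flow"
  using F.restr_sign_chain_short short_Flow_lift by (auto simp: short_cov_zchains[OF finite_E])

definition phi :: "('e \<Rightarrow> rat) set \<Rightarrow> ('e \<Rightarrow> rat) set" where
  "phi = induced_map {x. odd_chain E x} (\<lambda>x. char_class Cut (PC x)) (\<lambda>x. char_class Flow (PF x))"

definition psi :: "('e \<Rightarrow> rat) set \<Rightarrow> ('e \<Rightarrow> rat) set" where
  "psi = induced_map (zchains E) (\<lambda>x. dcoset Cut (PC x)) (\<lambda>x. dcoset Flow (PF x))"

lemma phi_char_class: "odd_chain E x \<Longrightarrow> phi (char_class Cut (PC x)) = char_class Flow (PF x)"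
  unfolding phi_def using char_class_Cut_eq_iff_Flow by (intro induced_map_eq) auto

lemma psi_dcoset: "x \<in> zchains E \<Longrightarrow> psi (dcoset Cut (PC x)) = dcoset Flow (PF x)"
  unfolding psi_def using dcoset_Cut_eq_iff_Flow by (intro induced_map_eq) auto

lemma bij_betw_phi: "bij_betw phi (char_classes E Cut) (char_classes E Flow)"
  unfolding phi_def C.char_classes_eq_image[OF restr_Cut_zchains]
    F.char_classes_eq_image[OF restr_Flow_zchains]
  using char_class_Cut_eq_iff_Flow by (intro bij_betw_induced_map) auto

lemma psi_iso: "psi \<in> iso (disc_group E Cut) (disc_group E Flow)"
proof -
  have carrier: "carrier (disc_group E Cut) = (\<lambda>x. dcoset Cut (PC x)) ` zchains E"
    "carrier (disc_group E Flow) = (\<lambda>x. dcoset Flow (PF x)) ` zchains E"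
    using C.carrier_disc_group[OF restr_Cut_zchains] F.carrier_disc_group[OF restr_Flow_zchains] .
  have "psi (monoid.mult (disc_group E Cut) A B) = monoid.mult (disc_group E Flow) (psi A) (psi B)"
    if AB: "A \<in> carrier (disc_group E Cut)" "B \<in> carrier (disc_group E Cut)" for A B
  proof -
    obtain x y where "x \<in> zchains E" "y \<in> zchains E" "A = dcoset Cut (PC x)" "B = dcoset Cut (PC y)"
      using AB unfolding carrier by blast
    then show ?thesis
      by (simp add: C.dcoset_mult F.dcoset_mult psi_dcoset zchains_add
          flip: C.restr_add F.restr_add)
  qed
  moreover have "bij_betw psi (carrier (disc_group E Cut)) (carrier (disc_group E Flow))"
    unfolding psi_def carrier using dcoset_Cut_eq_iff_Flow by (intro bij_betw_induced_map) auto
  ultimately show ?thesis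
    by (auto simp: iso_def hom_def bij_betw_def)
qed

lemma dinv_phi:
  assumes c: "c \<in> char_classes E Cut"
  shows "- dinv E Flow (phi c) = dinv E Cut c"
proof -
  obtain \<xi> where \<xi>: "\<xi> \<in> char_cov E Cut" "c = char_class Cut \<xi>"
    using c unfolding char_classes_def by blast
  obtain s where s: "s \<in> char_class Cut \<xi>" "s \<in> short_cov E Cut"
    using C.short_in_char_class[OF \<xi>(1)] by blast
  obtain \<chi> where \<chi>: "sign_chain E \<chi>" "PC \<chi> = s"
    using short_Cut_lift[OF s(2)] by blast
  have c_eq: "c = char_class Cut (PC \<chi>)"
    using C.char_class_eq_of_mem[OF s(1)] \<xi>(2) \<chi>(2) by simp
  have "ip E (PC \<chi>) (PC \<chi>) + ip E (PF \<chi>) (PF \<chi>) = of_nat (lat_rank Cut + lat_rank Flow)"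
    using norm_restr_split sign_chain_norm[OF finite_E \<chi>(1)] \<chi>(1) rank_Cut_add_rank_Flow
    by (simp add: sign_chain_def)
  then have "real_of_rat (ip E (PC \<chi>) (PC \<chi>)) + real_of_rat (ip E (PF \<chi>) (PF \<chi>))
      = real (lat_rank Cut) + real (lat_rank Flow)"
    by (metis of_nat_add of_rat_add of_rat_of_nat_eq)
  then show ?thesis
    unfolding c_eq phi_char_class[OF sign_chain_imp_odd_chain[OF \<chi>(1)]]
      C.dinv_short[OF C.restr_sign_chain_short[OF \<chi>(1)]]
      F.dinv_short[OF F.restr_sign_chain_short[OF \<chi>(1)]]
    by (simp add: field_simps)
qed

lemma tdiff_phi:
  assumes "c \<in> char_classes E Cut" "c' \<in> char_classes E Cut"
  shows "tdiff Flow (phi c) (phi c') = psi (tdiff Cut c c')"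
proof -
  obtain x x' where x: "odd_chain E x" "c = char_class Cut (PC x)"
    and x': "odd_chain E x'" "c' = char_class Cut (PC x')"
    using assms unfolding C.char_classes_eq_image[OF restr_Cut_zchains] by blast
  define z where "z = qscale (1/2) (x - x')"
  have z: "z \<in> zchains E" unfolding z_def using half_diff_odd_chains[OF x(1) x'(1)] .
  have "tdiff Cut c c' = dcoset Cut (PC z)"
    unfolding x(2) x'(2) C.tdiff_char_class z_def C.restr_scale C.restr_diff ..
  moreover have "tdiff Flow (phi c) (phi c') = dcoset Flow (PF z)"
    unfolding x(2) x'(2) phi_char_class[OF x(1)] phi_char_class[OF x'(1)] F.tdiff_char_class
      z_def F.restr_scale F.restr_diff ..
  ultimately show ?thesis using psi_dcoset[OF z] by simp
qed

end

theorem corollary3p4: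
  fixes V :: "'v set" and E :: "'e set" and src tgt :: "'e \<Rightarrow> 'v"
  assumes "finite V" and "finite E"
    and "\<forall>e\<in>E. src e \<in> V \<and> tgt e \<in> V"
    and "\<forall>e\<in>E. src e \<noteq> tgt e"
  defines "Cut \<equiv> cut_lattice V E src tgt" and "Flow \<equiv> flow_lattice V E src tgt"
  shows "restr E Cut ` short_cov E (zchains E) = short_cov E Cut
    \<and> restr E Flow ` short_cov E (zchains E) = short_cov E Flow
    \<and> (\<exists>\<phi> \<psi>.
           bij_betw \<phi> (char_classes E Cut) (char_classes E Flow)
         \<and> \<psi> \<in> iso (disc_group E Cut) (disc_group E Flow)
         \<and> (\<forall>c\<in>char_classes E Cut. - dinv E Flow (\<phi> c) = dinv E Cut c)
         \<and> (\<forall>c\<in>char_classes E Cut. \<forall>c'\<in>char_classes E Cut.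
               tdiff Flow (\<phi> c) (\<phi> c') = \<psi> (tdiff Cut c c'))
         \<and> (\<forall>\<chi>\<in>char_cov E (zchains E).
               \<phi> (char_class Cut (restr E Cut \<chi>)) = char_class Flow (restr E Flow \<chi>))
         \<and> (\<forall>x\<in>zchains E.
               \<psi> (dcoset Cut (restr E Cut x)) = dcoset Flow (restr E Flow x)))"
proof -
  interpret finite_graph V E src tgt
    using assms(1-3) by unfold_locales
  show ?thesis
    unfolding Cut_def Flow_def
    by (intro conjI exI[of _ phi, OF exI[of _ psi]])
      (simp_all add: restr_Cut_short_cov restr_Flow_short_cov bij_betw_phi psi_iso dinv_phi
        tdiff_phi char_cov_zchains[OF finite_E] phi_char_class psi_dcoset)
qed

end
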